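(* Let $\mathbb F$ be a field of characteristic zero, $G$ a torsion free abelian group and $\mathcal A$ a unital associative $\mathbb F$-algebra. If $\mathcal A^+$ is a Jordan $G$-torus (with grading $\mathcal A^+=\bigoplus_{\sigma\in G}\mathcal A^\sigma$), then $\mathcal A\cong_G(\mathbb F^t[G],\lambda)$ for some $2$-cocycle $\lambda:G\times G\to\mathbb F^\times$ (with respect to the same grading $\mathcal A=\bigoplus_{\sigma}\mathcal A^\sigma$). In particular, if $G$ is free abelian, then $\mathcal A\cong_G(\mathbb F^t[G],\mathbf q)$ for some quantum matrix $\mathbf q$.
   Context: $\mathcal A^+$ is the vector space $\mathcal A$ with the Jordan product $a\circ b=\frac12(ab+ba)$. A $G$-graded algebra $J=\bigoplus_{\sigma\in G}J^\sigma$ is a $G$-torus if $G$ is generated by $\{\sigma\mid J^\sigma\neq0\}$, every nonzero homogeneous element is invertible, and $\dim J^\sigma\le1$ for all $\sigma$. A $2$-cocycle is a map $\lambda:G\times G\to\mathbb F^\times$ with $\lambda(\sigma+\tau,\mu)\lambda(\sigma,\tau)=\lambda(\sigma,\tau+\mu)\lambda(\tau,\mu)$; $(\mathbb F^t[G],\lambda)$ is the algebra with basis $\{x^\sigma\}_{\sigma\in G}$, product $x^\sigma x^\tau=\lambda(\sigma,\tau)x^{\sigma+\tau}$, graded by $\mathbb Fx^\sigma$ in degree $\sigma$. If $G$ is free abelian with basis $\{\sigma_i\}_{i\in I}$ ($I$ totally ordered), a quantum matrix is a matrix $\mathbf q=(q_{ij})_{i,j\in I}$ over $\mathbb F^\times$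 with $q_{ii}=1$, $q_{ij}=q_{ji}^{-1}$, and the quantum torus $(\mathbb F^t[G],\mathbf q)$ is the unital associative algebra generated by $y_i,y_i^{-1}$ ($i\in I$) subject to $y_iy_j=q_{ij}y_jy_i$, $y_iy_i^{-1}=y_i^{-1}y_i=1$, graded by $\deg y_i=\sigma_i$. $\cong_G$ means isomorphism of $G$-graded algebras. *)

theory Defs
  imports Main
begin

definition natmul :: "nat \<Rightarrow> 'g::ab_group_add \<Rightarrow> 'g" where
  "natmul n x = (\<Sum>i<n. x)"

definition zmul :: "int \<Rightarrow> 'g::ab_group_add \<Rightarrow> 'g" where
  "zmul k x = (if 0 \<le> k then natmul (nat k) x else - natmul (nat (- k)) x)"

definition torsion_free :: "'g::ab_group_add itself \<Rightarrow> bool" where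
  "torsion_free _ \<longleftrightarrow> (\<forall>(n::nat) (x::'g). n \<noteq> 0 \<longrightarrow> natmul n x = 0 \<longrightarrow> x = 0)"

definition add_subgroup :: "'g::ab_group_add set \<Rightarrow> bool" where
  "add_subgroup H \<longleftrightarrow> 0 \<in> H \<and> (\<forall>x\<in>H. \<forall>y\<in>H. x + y \<in> H) \<and> (\<forall>x\<in>H. - x \<in> H)"

definition generates_group :: "'g::ab_group_add set \<Rightarrow> bool" where
  "generates_group S \<longleftrightarrow> (\<forall>H. add_subgroup H \<and> S \<subseteq> H \<longrightarrow> H = UNIV)"

definition free_basis :: "('i \<Rightarrow> 'g::ab_group_add) \<Rightarrow> bool" where
  "free_basis b \<longleftrightarrow> (\<forall>g. \<exists>!c :: 'i \<Rightarrow> int. finite {i. c i \<noteq> 0} \<and>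
       g = (\<Sum>i\<in>{i. c i \<noteq> 0}. zmul (c i) (b i)))"

text \<open>The ring structure of 'a (class ring_1, so 1 is distinct from 0) together with a scalar
  multiplication sc makes 'a a unital associative 'k-algebra.\<close>
definition is_algebra :: "('k::field \<Rightarrow> 'a::ring_1 \<Rightarrow> 'a) \<Rightarrow> bool" where
  "is_algebra sc \<longleftrightarrow>
     (\<forall>c x y. sc c (x + y) = sc c x + sc c y) \<and>
     (\<forall>c d x. sc (c + d) x = sc c x + sc d x) \<and>
     (\<forall>c d x. sc (c * d) x = sc c (sc d x)) \<and>
     (\<forall>x. sc 1 x = x) \<and>
     (\<forall>c x y. sc c (x * y) = sc c x * y) \<and>
     (\<forall>c x y. sc c (x * y) = x * sc c y)"

definition subspace_of :: "('k::field \<Rightarrow> 'a::ring_1 \<Rightarrow> 'a) \<Rightarrow> 'a set \<Rightarrow> bool" where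
  "subspace_of sc S \<longleftrightarrow> 0 \<in> S \<and> (\<forall>x\<in>S. \<forall>y\<in>S. x + y \<in> S) \<and> (\<forall>c. \<forall>x\<in>S. sc c x \<in> S)"

definition vs_grading :: "('k::field \<Rightarrow> 'a::ring_1 \<Rightarrow> 'a) \<Rightarrow> ('g \<Rightarrow> 'a set) \<Rightarrow> bool" where
  "vs_grading sc Agr \<longleftrightarrow> (\<forall>\<sigma>. subspace_of sc (Agr \<sigma>)) \<and>
     (\<forall>a. \<exists>!c :: 'g \<Rightarrow> 'a. finite {\<sigma>. c \<sigma> \<noteq> 0} \<and> (\<forall>\<sigma>. c \<sigma> \<in> Agr \<sigma>) \<and>
          a = (\<Sum>\<sigma>\<in>{\<sigma>. c \<sigma> \<noteq> 0}. c \<sigma>))"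

definition jprod :: "('k::field \<Rightarrow> 'a::ring_1 \<Rightarrow> 'a) \<Rightarrow> 'a \<Rightarrow> 'a \<Rightarrow> 'a" where
  "jprod sc a b = sc (inverse 2) (a * b + b * a)"

definition jordan_invertible :: "('k::field \<Rightarrow> 'a::ring_1 \<Rightarrow> 'a) \<Rightarrow> 'a \<Rightarrow> bool" where
  "jordan_invertible sc x \<longleftrightarrow> (\<exists>y. jprod sc x y = 1 \<and> jprod sc (jprod sc x x) y = x)"

definition jordan_grading :: "('k::field \<Rightarrow> 'a::ring_1 \<Rightarrow> 'a) \<Rightarrow> ('g::ab_group_add \<Rightarrow> 'a set) \<Rightarrow> bool" where
  "jordan_grading sc Agr \<longleftrightarrow> vs_grading sc Agr \<and>
     (\<forall>\<sigma> \<tau>. \<forall>x\<in>Agr \<sigma>. \<forall>y\<in>Agr \<tau>. jprod sc x y \<in> Agr (\<sigma> + \<tau>))"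

definition jordan_torus :: "('k::field \<Rightarrow> 'a::ring_1 \<Rightarrow> 'a) \<Rightarrow> ('g::ab_group_add \<Rightarrow> 'a set) \<Rightarrow> bool" where
  "jordan_torus sc Agr \<longleftrightarrow> jordan_grading sc Agr \<and>
     generates_group {\<sigma>. Agr \<sigma> \<noteq> {0}} \<and>
     (\<forall>\<sigma>. \<forall>x\<in>Agr \<sigma>. x \<noteq> 0 \<longrightarrow> jordan_invertible sc x) \<and>
     (\<forall>\<sigma>. \<exists>v. Agr \<sigma> \<subseteq> range (\<lambda>c. sc c v))"

definition fsupp :: "('b \<Rightarrow> 'k::zero) \<Rightarrow> bool" where
  "fsupp f \<longleftrightarrow> finite {x. f x \<noteq> 0}"

definition cocycle :: "('g::ab_group_add \<Rightarrow> 'g \<Rightarrow> 'k::field) \<Rightarrow> bool" where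
  "cocycle lam \<longleftrightarrow> (\<forall>\<sigma> \<tau>. lam \<sigma> \<tau> \<noteq> 0) \<and>
     (\<forall>\<sigma> \<tau> \<mu>. lam (\<sigma> + \<tau>) \<mu> * lam \<sigma> \<tau> = lam \<sigma> (\<tau> + \<mu>) * lam \<tau> \<mu>)"

text \<open>(F^t[G], lam): elements are finitely supported f :: G => F, i.e. sum of f sigma x^sigma\<close>
definition tw_mult :: "('g::ab_group_add \<Rightarrow> 'g \<Rightarrow> 'k::field) \<Rightarrow> ('g \<Rightarrow> 'k) \<Rightarrow> ('g \<Rightarrow> 'k) \<Rightarrow> 'g \<Rightarrow> 'k" where
  "tw_mult lam f g = (\<lambda>\<rho>. \<Sum>\<sigma>\<in>{\<sigma>. f \<sigma> \<noteq> 0}. \<Sum>\<tau>\<in>{\<tau>. g \<tau> \<noteq> 0}.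
       if \<sigma> + \<tau> = \<rho> then lam \<sigma> \<tau> * f \<sigma> * g \<tau> else 0)"

definition graded_iso_twisted :: "('k::field \<Rightarrow> 'a::ring_1 \<Rightarrow> 'a) \<Rightarrow> ('g::ab_group_add \<Rightarrow> 'a set)
    \<Rightarrow> ('g \<Rightarrow> 'g \<Rightarrow> 'k) \<Rightarrow> bool" where
  "graded_iso_twisted sc Agr lam \<longleftrightarrow> (\<exists>\<phi> :: 'a \<Rightarrow> 'g \<Rightarrow> 'k.
     bij_betw \<phi> UNIV {f. fsupp f} \<and>
     (\<forall>a b. \<phi> (a + b) = (\<lambda>\<sigma>. \<phi> a \<sigma> + \<phi> b \<sigma>)) \<and>
     (\<forall>c a. \<phi> (sc c a) = (\<lambda>\<sigma>. c * \<phi> a \<sigma>)) \<and>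
     (\<forall>a b. \<phi> (a * b) = tw_mult lam (\<phi> a) (\<phi> b)) \<and>
     (\<forall>\<sigma>. \<phi> ` Agr \<sigma> = {f. \<forall>\<tau>. \<tau> \<noteq> \<sigma> \<longrightarrow> f \<tau> = 0}))"

definition quantum_matrix :: "('i \<Rightarrow> 'i \<Rightarrow> 'k::field) \<Rightarrow> bool" where
  "quantum_matrix q \<longleftrightarrow> (\<forall>i j. q i j \<noteq> 0) \<and> (\<forall>i. q i i = 1) \<and> (\<forall>i j. q i j = inverse (q j i))"

text \<open>Free unital associative algebra on letters Inl i (= y_i) and Inr i (= y_i^-1):
  finitely supported functions from words to 'k, with concatenation product.\<close>
definition free_mult :: "(('i + 'i) list \<Rightarrow> 'k::field) \<Rightarrow> (('i + 'i) list \<Rightarrow> 'k) \<Rightarrow> ('i + 'i) list \<Rightarrow> 'k" where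
  "free_mult f g = (\<lambda>w. \<Sum>u\<in>{u. f u \<noteq> 0}. \<Sum>v\<in>{v. g v \<noteq> 0}. if u @ v = w then f u * g v else 0)"

definition letter_deg :: "('i \<Rightarrow> 'g::ab_group_add) \<Rightarrow> 'i + 'i \<Rightarrow> 'g" where
  "letter_deg b l = (case l of Inl i \<Rightarrow> b i | Inr i \<Rightarrow> - b i)"

definition word_deg :: "('i \<Rightarrow> 'g::ab_group_add) \<Rightarrow> ('i + 'i) list \<Rightarrow> 'g" where
  "word_deg b w = sum_list (map (letter_deg b) w)"

definition free_deg :: "('i \<Rightarrow> 'g::ab_group_add) \<Rightarrow> 'g \<Rightarrow> (('i + 'i) list \<Rightarrow> 'k::field) set" where
  "free_deg b \<sigma> = {f. fsupp f \<and> (\<forall>w. f w \<noteq> 0 \<longrightarrow> word_deg b w = \<sigma>)}"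

definition qt_relations :: "('i \<Rightarrow> 'i \<Rightarrow> 'k::field) \<Rightarrow> (('i + 'i) list \<Rightarrow> 'k) set" where
  "qt_relations q =
     {(\<lambda>w. (if w = [Inl i, Inl j] then 1 else 0) - (if w = [Inl j, Inl i] then q i j else 0)) | i j. True} \<union>
     {(\<lambda>w. (if w = [Inl i, Inr i] then 1 else 0) - (if w = [] then 1 else 0)) | i. True} \<union>
     {(\<lambda>w. (if w = [Inr i, Inl i] then 1 else 0) - (if w = [] then 1 else 0)) | i. True}"

definition free_ideal :: "(('i + 'i) list \<Rightarrow> 'k::field) set \<Rightarrow> (('i + 'i) list \<Rightarrow> 'k) set" where
  "free_ideal R = \<Inter>{J. J \<subseteq> {f. fsupp f} \<and> R \<subseteq> J \<and> (\<lambda>w. 0) \<in> J \<and>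
       (\<forall>f\<in>J. \<forall>g\<in>J. (\<lambda>w. f w + g w) \<in> J) \<and>
       (\<forall>c. \<forall>f\<in>J. (\<lambda>w. c * f w) \<in> J) \<and>
       (\<forall>f\<in>J. \<forall>g. fsupp g \<longrightarrow> free_mult g f \<in> J \<and> free_mult f g \<in> J)}"

text \<open>The unital algebra homomorphism from the free algebra to A sending y_i to z i and
  y_i^-1 to zi i (every unital homomorphism from the free algebra is of this form)\<close>
definition free_eval :: "('k::field \<Rightarrow> 'a::ring_1 \<Rightarrow> 'a) \<Rightarrow> ('i \<Rightarrow> 'a) \<Rightarrow> ('i \<Rightarrow> 'a)
    \<Rightarrow> (('i + 'i) list \<Rightarrow> 'k) \<Rightarrow> 'a" where
  "free_eval sc z zi f = (\<Sum>w\<in>{w. f w \<noteq> 0}.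
     sc (f w) (prod_list (map (\<lambda>l. case l of Inl i \<Rightarrow> z i | Inr i \<Rightarrow> zi i) w)))"

text \<open>A is isomorphic as G-graded algebra (grading Agr) to the quantum torus (F^t[G], q)
  graded by deg y_i = b i: by the first isomorphism theorem, this means there is a
  surjective unital homomorphism from the free algebra onto A whose kernel is the ideal
  of relations, mapping the degree-sigma part onto Agr sigma.\<close>
definition graded_iso_quantum_torus :: "('k::field \<Rightarrow> 'a::ring_1 \<Rightarrow> 'a) \<Rightarrow> ('g::ab_group_add \<Rightarrow> 'a set)
    \<Rightarrow> ('i \<Rightarrow> 'g) \<Rightarrow> ('i \<Rightarrow> 'i \<Rightarrow> 'k) \<Rightarrow> bool" where
  "graded_iso_quantum_torus sc Agr b q \<longleftrightarrow> (\<exists>z zi :: 'i \<Rightarrow> 'a.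
     free_eval sc z zi ` {f. fsupp f} = UNIV \<and>
     {f. fsupp f \<and> free_eval sc z zi f = 0} = free_ideal (qt_relations q) \<and>
     (\<forall>\<sigma>. free_eval sc z zi ` free_deg b \<sigma> = Agr \<sigma>))"

end

theory Submission
  imports Defs
begin

text \<open>Nonzero homogeneous elements of \<open>A\<^sup>+\<close> are Jordan invertible, hence invertible in \<open>A\<close>.
  The associative product respects the grading: \<open>x y + y x\<close> and \<open>x z x = 2 x\<circ>(x\<circ>z) - x\<^sup>2\<circ>z\<close>
  are Jordan expressions, and the commutator \<open>x y - y x\<close> is homogeneous because its square is,
  since a torsion-free group can be linearly ordered and the extreme points of the support of
  \<open>u\<close> survive in \<open>u\<^sup>2\<close>. So \<open>A\<close> is a graded division algebra with one-dimensional components,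
  all nonzero as the support is a subgroup generating \<open>G\<close>. Choosing \<open>x\<^sup>\<sigma> \<noteq> 0\<close> in each
  component gives \<open>x\<^sup>\<sigma> x\<^sup>\<tau> = \<lambda>(\<sigma>,\<tau>) x\<^bsup>\<sigma>+\<tau>\<^esub>\<close>, and \<open>\<lambda>\<close> is a 2-cocycle by associativity.
  For a free basis \<open>\<sigma>\<^sub>i\<close> the chosen elements \<open>y\<^sub>i\<close> of degree \<open>\<sigma>\<^sub>i\<close> satisfy the quantum torus
  relations; the evaluation of the free algebra is onto and graded, and its kernel is generated
  by the relations because modulo them any two words of the same degree are proportional.\<close>

section \<open>Compatible linear orders on torsion-free abelian groups\<close>

lemma natmul_0 [simp]: "natmul 0 x = 0"
  by (simp add: natmul_def)

lemma natmul_Suc: "natmul (Suc n) x = x + natmul n x"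
  by (simp add: natmul_def add.commute)

lemma natmul_1 [simp]: "natmul (Suc 0) x = x"
  by (simp add: natmul_def)

lemma natmul_add_left: "natmul (m + n) x = natmul m x + natmul n x"
  by (induction m) (simp_all add: natmul_Suc add.assoc)

lemma natmul_add_right: "natmul n (x + y) = natmul n x + natmul n y"
  by (induction n) (simp_all add: natmul_Suc algebra_simps)

lemma natmul_minus_right: "natmul n (- x) = - natmul n x"
  by (induction n) (simp_all add: natmul_Suc algebra_simps)

lemma natmul_natmul: "natmul m (natmul n x) = natmul (m * n) x"
  by (induction m) (simp_all add: natmul_Suc natmul_add_left)

lemma torsion_free_double_cancel:
  fixes a b :: "'g::ab_group_add"
  assumes "torsion_free TYPE('g)" and "a + a = b + b"
  shows "a = b"
proof -
  have "natmul 2 (a - b) = 0"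
    using assms(2) by (simp add: natmul_def numeral_2_eq_2 algebra_simps)
  then show ?thesis
    using assms(1) unfolding torsion_free_def by (metis zero_neq_numeral eq_iff_diff_eq_0)
qed

definition isolated_cone :: "'g::ab_group_add set \<Rightarrow> bool" where
  "isolated_cone C \<longleftrightarrow> (\<forall>x\<in>C. \<forall>y\<in>C. x + y \<in> C) \<and> 0 \<notin> C \<and>
     (\<forall>m x. m > 0 \<longrightarrow> natmul m x \<in> C \<longrightarrow> x \<in> C)"

definition total_cone :: "'g::ab_group_add set \<Rightarrow> bool" where
  "total_cone C \<longleftrightarrow> (\<forall>x\<in>C. \<forall>y\<in>C. x + y \<in> C) \<and> 0 \<notin> C \<and> (\<forall>x. x \<noteq> 0 \<longrightarrow> x \<in> C \<or> - x \<in> C)"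

lemma isolated_cone_isolator:
  fixes S :: "'g::ab_group_add set"
  assumes add: "\<forall>x\<in>S. \<forall>y\<in>S. x + y \<in> S" and zero: "0 \<notin> S"
  shows "isolated_cone {y. \<exists>m>0. natmul m y \<in> S}"
  unfolding isolated_cone_def
proof (intro conjI allI ballI impI)
  have multiple: "natmul k a \<in> S" if "a \<in> S" "k > 0" for a k
    using that(2)
  proof (induction k)
    case (Suc k) then show ?case using that(1) add by (cases k) (auto simp: natmul_Suc)
  qed simp
  fix a b assume "a \<in> {y. \<exists>m>0. natmul m y \<in> S}" "b \<in> {y. \<exists>m>0. natmul m y \<in> S}"
  then obtain m k where "m > 0" "natmul m a \<in> S" "k > 0" "natmul k b \<in> S"
    by auto
  then have "natmul k (natmul m a) + natmul m (natmul k b) \<in> S"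
    using add multiple by blast
  then have "natmul (k * m) (a + b) \<in> S"
    by (simp add: natmul_add_right natmul_natmul mult.commute)
  then show "a + b \<in> {y. \<exists>m>0. natmul m y \<in> S}"
    using \<open>m > 0\<close> \<open>k > 0\<close> by (auto intro!: exI[of _ "k * m"])
next
  show "0 \<notin> {y. \<exists>m>0. natmul m y \<in> S}"
    using zero by (simp add: natmul_def)
next
  fix m :: nat and a assume "m > 0" "natmul m a \<in> {y. \<exists>m>0. natmul m y \<in> S}"
  then obtain k where "k > 0" "natmul (k * m) a \<in> S"
    by (auto simp: natmul_natmul)
  then show "a \<in> {y. \<exists>m>0. natmul m y \<in> S}"
    using \<open>m > 0\<close> by (intro CollectI exI[of _ "k * m"]) simp
qed

definition cone_adjoin :: "'g::ab_group_add set \<Rightarrow> 'g \<Rightarrow> 'g set" where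
  "cone_adjoin C x = {c + natmul n x | c n. (c \<in> C \<or> c = 0) \<and> (c \<in> C \<or> n > 0)}"

lemma cone_adjoin_add:
  assumes "\<forall>x\<in>C. \<forall>y\<in>C. x + y \<in> C" and "a \<in> cone_adjoin C x" and "b \<in> cone_adjoin C x"
  shows "a + b \<in> cone_adjoin C x"
proof -
  obtain c n c' n' where "a = c + natmul n x" "(c \<in> C \<or> c = 0) \<and> (c \<in> C \<or> n > 0)"
    and "b = c' + natmul n' x" "(c' \<in> C \<or> c' = 0) \<and> (c' \<in> C \<or> n' > 0)"
    using assms(2,3) unfolding cone_adjoin_def by blast
  moreover from calculation have "a + b = (c + c') + natmul (n + n') x"
    by (simp add: natmul_add_left algebra_simps)
  moreover from calculation have "(c + c' \<in> C \<or> c + c' = 0) \<and> (c + c' \<in> C \<or> n + n' > 0)"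
    using assms(1) by auto
  ultimately show ?thesis
    unfolding cone_adjoin_def by blast
qed

lemma zero_notin_cone_adjoin:
  fixes C :: "'g::ab_group_add set"
  assumes "torsion_free TYPE('g)" and "isolated_cone C" and "x \<noteq> 0" and "- x \<notin> C"
  shows "0 \<notin> cone_adjoin C x"
proof
  assume "0 \<in> cone_adjoin C x"
  then obtain c n where c: "c \<in> C \<or> c = 0" "c \<in> C \<or> n > 0" and "0 = c + natmul n x"
    unfolding cone_adjoin_def by blast
  then have c_eq: "c = natmul n (- x)"
    by (simp add: natmul_minus_right eq_neg_iff_add_eq_0)
  show False
  proof (cases "c \<in> C")
    case True
    then have "n > 0" using c_eq assms(2) by (cases n) (auto simp: isolated_cone_def)
    then show False using assms(2,4) c_eq True unfolding isolated_cone_def by blast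
  next
    case False
    then have "natmul n x = 0" "n > 0" using c c_eq by (auto simp: natmul_minus_right)
    then show False using assms(1,3) by (auto simp: torsion_free_def)
  qed
qed

text \<open>The extension step of Levi's theorem: the isolator of the cone generated by \<open>C\<close> and \<open>x\<close>.\<close>
lemma isolated_cone_extend:
  fixes C :: "'g::ab_group_add set"
  assumes "torsion_free TYPE('g)" and "isolated_cone C" and "x \<noteq> 0" and "- x \<notin> C"
  shows "\<exists>D. isolated_cone D \<and> C \<subseteq> D \<and> x \<in> D"
proof -
  have add: "\<forall>a\<in>cone_adjoin C x. \<forall>b\<in>cone_adjoin C x. a + b \<in> cone_adjoin C x"
    using assms(2) cone_adjoin_add unfolding isolated_cone_def by blast
  have "c \<in> cone_adjoin C x" if "c \<in> C" for c
    unfolding cone_adjoin_def using that by (intro CollectI exI[of _ c] exI[of _ 0]) simp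
  moreover have "x \<in> cone_adjoin C x"
    unfolding cone_adjoin_def by (intro CollectI exI[of _ 0] exI[of _ 1]) simp
  ultimately have "C \<subseteq> {y. \<exists>m>0. natmul m y \<in> cone_adjoin C x}"
    and "x \<in> {y. \<exists>m>0. natmul m y \<in> cone_adjoin C x}"
    by (auto intro!: exI[of _ 1])
  then show ?thesis
    using isolated_cone_isolator[OF add zero_notin_cone_adjoin[OF assms]] by blast
qed

text \<open>Levi's theorem: a torsion-free abelian group admits a linear order compatible with
  addition, here given by its set of positive elements.\<close>
lemma torsion_free_ex_total_cone:
  assumes "torsion_free TYPE('g::ab_group_add)"
  shows "\<exists>C::'g set. total_cone C"
proof -
  let ?A = "{C::'g set. isolated_cone C}"
  have "\<Union>K \<in> ?A" if "K \<in> chains ?A" for K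
  proof -
    have cones: "\<And>C. C \<in> K \<Longrightarrow> isolated_cone C"
      and chain: "\<And>C D. C \<in> K \<Longrightarrow> D \<in> K \<Longrightarrow> C \<subseteq> D \<or> D \<subseteq> C"
      using that by (auto simp: chains_def chain_subset_def)
    show ?thesis
      unfolding isolated_cone_def mem_Collect_eq
    proof (intro conjI allI ballI impI)
      fix a b assume "a \<in> \<Union>K" "b \<in> \<Union>K"
      then obtain C D where "C \<in> K" "D \<in> K" "a \<in> C" "b \<in> D" by auto
      then show "a + b \<in> \<Union>K" using chain[of C D] cones unfolding isolated_cone_def by blast
    next
      show "0 \<notin> \<Union>K" using cones unfolding isolated_cone_def by blast
    next
      fix m a assume "(0::nat) < m" "natmul m a \<in> \<Union>K"
      then show "a \<in> \<Union>K" using cones unfolding isolated_cone_def by blast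
    qed
  qed
  then obtain M where M: "M \<in> ?A" and max: "\<forall>D\<in>?A. M \<subseteq> D \<longrightarrow> D = M"
    using Zorn_Lemma[of ?A] by blast
  have "x \<in> M \<or> - x \<in> M" if x: "x \<noteq> 0" for x
  proof (rule ccontr)
    assume x_out: "\<not> (x \<in> M \<or> - x \<in> M)"
    then obtain D where "isolated_cone D" "M \<subseteq> D" "x \<in> D"
      using isolated_cone_extend[OF assms _ x, of M] M by auto
    then show False using max x_out by auto
  qed
  then show ?thesis
    using M unfolding isolated_cone_def total_cone_def by blast
qed

lemma total_cone_uminus:
  fixes C :: "'g::ab_group_add set"
  assumes "total_cone C"
  shows "total_cone (uminus ` C)"
  unfolding total_cone_def
proof (intro conjI allI ballI impI)
  have add: "\<forall>x\<in>C. \<forall>y\<in>C. x + y \<in> C" and "0 \<notin> C"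
    and tot: "\<And>x. x \<noteq> 0 \<Longrightarrow> x \<in> C \<or> - x \<in> C"
    using assms by (auto simp: total_cone_def)
  fix x y assume "x \<in> uminus ` C" "y \<in> uminus ` C"
  then obtain a b where "a \<in> C" "b \<in> C" "x = - a" "y = - b" by blast
  then show "x + y \<in> uminus ` C"
    using add by (intro image_eqI[of _ _ "a + b"]) auto
next
  show "0 \<notin> uminus ` C" using assms by (auto simp: total_cone_def)
next
  fix x :: 'g assume "x \<noteq> 0"
  then have "- x \<in> C \<or> x \<in> C" using assms unfolding total_cone_def by blast
  then show "x \<in> uminus ` C \<or> - x \<in> uminus ` C"
    by (metis image_eqI minus_minus)
qed

lemma total_cone_ex_max:
  assumes "total_cone C" and "finite P" and "P \<noteq> {}"
  shows "\<exists>m\<in>P. \<forall>p\<in>P. p \<noteq> m \<longrightarrow> m - p \<in> C"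
  using assms(2,3)
proof (induction P rule: finite_ne_induct)
  case (insert a P)
  then obtain m where m: "m \<in> P" "\<forall>p\<in>P. p \<noteq> m \<longrightarrow> m - p \<in> C" by auto
  have add: "\<forall>x\<in>C. \<forall>y\<in>C. x + y \<in> C" and tot: "\<And>x. x \<noteq> 0 \<Longrightarrow> x \<in> C \<or> - x \<in> C"
    using assms(1) by (auto simp: total_cone_def)
  show ?case
  proof (cases "a \<noteq> m \<and> a - m \<in> C")
    case True
    have "a - p \<in> C" if "p \<in> P" "p \<noteq> m" for p
    proof -
      have "(a - m) + (m - p) \<in> C" using add True m that by blast
      then show ?thesis by simp
    qed
    then show ?thesis using True m by auto
  next
    case False
    then have "a \<noteq> m \<longrightarrow> m - a \<in> C" using tot[of "a - m"] by auto
    then show ?thesis using m by auto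
  qed
qed simp

definition extreme_point :: "'g::ab_group_add set \<Rightarrow> 'g \<Rightarrow> bool" where
  "extreme_point P m \<longleftrightarrow> m \<in> P \<and> (\<forall>a\<in>P. \<forall>b\<in>P. a + b = m + m \<longrightarrow> a = m)"

lemma total_cone_max_extreme_point:
  assumes "total_cone C" and "m \<in> P" and max: "\<forall>p\<in>P. p \<noteq> m \<longrightarrow> m - p \<in> C"
  shows "extreme_point P m"
  unfolding extreme_point_def
proof (intro conjI ballI impI)
  fix a b assume ab: "a \<in> P" "b \<in> P" "a + b = m + m"
  have add: "\<forall>x\<in>C. \<forall>y\<in>C. x + y \<in> C" and "0 \<notin> C"
    using assms(1) by (auto simp: total_cone_def)
  show "a = m"
  proof (rule ccontr)
    assume "a \<noteq> m"
    then have "b \<noteq> m" using ab by auto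
    then have "(m - a) + (m - b) \<in> C" using add max ab \<open>a \<noteq> m\<close> by blast
    then show False using ab \<open>0 \<notin> C\<close> by (simp add: algebra_simps)
  qed
qed (fact \<open>m \<in> P\<close>)

text \<open>The maximum and the minimum of \<open>P\<close> for a compatible linear order are extreme points.\<close>
lemma extreme_points_singleton:
  fixes P :: "'g::ab_group_add set"
  assumes "torsion_free TYPE('g)" and "finite P" and extreme: "\<And>m. extreme_point P m \<Longrightarrow> m = t"
  shows "P \<subseteq> {t}"
proof (cases "P = {}")
  case False
  obtain C :: "'g set" where C: "total_cone C" using torsion_free_ex_total_cone[OF assms(1)] ..
  obtain m1 where m1: "m1 \<in> P" "\<forall>p\<in>P. p \<noteq> m1 \<longrightarrow> m1 - p \<in> C"
    using total_cone_ex_max[OF C assms(2) False] by blast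
  obtain m2 where m2: "m2 \<in> P" "\<forall>p\<in>P. p \<noteq> m2 \<longrightarrow> m2 - p \<in> uminus ` C"
    using total_cone_ex_max[OF total_cone_uminus[OF C] assms(2) False] by blast
  have "m1 = t"
    by (rule extreme, rule total_cone_max_extreme_point[OF C m1])
  have "m2 = t"
    by (rule extreme, rule total_cone_max_extreme_point[OF total_cone_uminus[OF C] m2])
  show ?thesis
  proof
    fix p assume "p \<in> P"
    show "p \<in> {t}"
    proof (rule ccontr)
      assume "p \<notin> {t}"
      then have "t - p \<in> C" "t - p \<in> uminus ` C"
        using m1 m2 \<open>m1 = t\<close> \<open>m2 = t\<close> \<open>p \<in> P\<close> by auto
      then obtain c where "c \<in> C" "t - p = - c" by auto
      then have "(t - p) + c \<in> C" using \<open>t - p \<in> C\<close> C unfolding total_cone_def by blast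
      then show False using \<open>t - p = - c\<close> C unfolding total_cone_def by simp
    qed
  qed
qed simp

section \<open>Jordan inverses\<close>

definition invertible :: "'a::ring_1 \<Rightarrow> bool" where
  "invertible x \<longleftrightarrow> (\<exists>y. x * y = 1 \<and> y * x = 1)"

lemma invertible_mult: "invertible x \<Longrightarrow> invertible y \<Longrightarrow> invertible (x * y)"
proof -
  assume "invertible x" "invertible y"
  then obtain x' y' where "x * x' = 1" "x' * x = 1" "y * y' = 1" "y' * y = 1"
    by (auto simp: invertible_def)
  then have "(x * y) * (y' * x') = 1" "(y' * x') * (x * y) = 1"
    by (simp_all add: mult.assoc[symmetric]) (simp_all add: mult.assoc)
  then show ?thesis by (auto simp: invertible_def)
qed

lemma invertible_nonzero: "invertible x \<Longrightarrow> x \<noteq> 0"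
  by (auto simp: invertible_def)

lemma invertible_mult_left_eq_0:
  assumes "invertible x" and "x * z = 0"
  shows "z = 0"
proof -
  obtain y where "y * x = 1" using assms(1) by (auto simp: invertible_def)
  then have "z = y * (x * z)" by (simp add: mult.assoc[symmetric])
  then show ?thesis using assms(2) by simp
qed

lemma invertible_mult_right_eq_0:
  assumes "invertible x" and "z * x = 0"
  shows "z = 0"
proof -
  obtain y where "x * y = 1" using assms(1) by (auto simp: invertible_def)
  then have "z = (z * x) * y" by (simp add: mult.assoc)
  then show ?thesis using assms(2) by simp
qed

lemma double_cancel:
  fixes h u v :: "'a::ring_1"
  assumes "h + h = 1" and "u + u = v + v"
  shows "u = v"
proof -
  have "w = h * (w + w)" for w :: 'a
  proof -
    have "w = (h + h) * w" using assms(1) by simp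
    then show ?thesis by (simp only: distrib_left distrib_right)
  qed
  then show ?thesis using assms(2) by metis
qed

lemma idempotents_sum_two:
  fixes h e f :: "'a::ring_1"
  assumes "h + h = 1" and "e * e = e" and "f * f = f" and "e + f = 1 + 1"
  shows "e = 1" and "f = 1"
proof -
  have "e * e + e * f = e + e" "e * e + f * e = e + e" "f * e + f * f = f + f"
    using arg_cong[OF assms(4), of "(*) e"] arg_cong[OF assms(4), of "\<lambda>x. x * e"]
      arg_cong[OF assms(4), of "(*) f"]
    by (simp_all add: distrib_left distrib_right del: one_add_one)
  then have "e = f" using assms(2,3) by simp
  then have "e + e = 1 + 1" using assms(4) by simp
  then show "e = 1" by (rule double_cancel[OF assms(1)])
  then show "f = 1" using \<open>e = f\<close> by simp
qed

text \<open>The Jordan inverse \<open>y\<close> of \<open>x\<close> (\<open>x \<circ> y = 1\<close>, \<open>x\<^sup>2 \<circ> y = x\<close>) is an associative inverse: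
  the two equations give \<open>x y x = x\<close>, so \<open>x y\<close> and \<open>y x\<close> are idempotents summing to \<open>2\<close>.\<close>
lemma jordan_inverse_imp_inverse:
  fixes h x y :: "'a::ring_1"
  assumes half: "h + h = 1"
    and "x * y + y * x = 1 + 1" and "x * x * y + y * (x * x) = x + x"
  shows "x * y = 1" and "y * x = 1"
proof -
  have "x * x * y + x * y * x = x + x" "x * y * x + y * x * x = x + x"
    using arg_cong[OF assms(2), of "(*) x"] arg_cong[OF assms(2), of "\<lambda>z. z * x"]
    by (simp_all add: distrib_left distrib_right mult.assoc del: one_add_one)
  then have "(x * y * x + x * y * x) + (x * x * y + y * (x * x)) = (x + x) + (x + x)"
    by (simp add: algebra_simps)
  then have "x * y * x + x * y * x = x + x"
    using assms(3) by simp
  then have "x * y * x = x"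
    by (rule double_cancel[OF half])
  then have "(x * y) * (x * y) = x * y" "(y * x) * (y * x) = y * x"
    by (simp_all add: mult.assoc[symmetric]) (simp add: mult.assoc)
  then show "x * y = 1" "y * x = 1"
    using idempotents_sum_two[OF half _ _ assms(2)] by auto
qed

section \<open>Algebras over a field and their gradings\<close>

locale scalar_algebra =
  fixes sc :: "'k::field \<Rightarrow> 'a::ring_1 \<Rightarrow> 'a"
  assumes is_algebra: "is_algebra sc"
begin

lemma sc_add_right: "sc c (x + y) = sc c x + sc c y"
  using is_algebra by (simp add: is_algebra_def)

lemma sc_add_left: "sc (c + d) x = sc c x + sc d x"
  using is_algebra by (simp add: is_algebra_def)

lemma sc_sc: "sc c (sc d x) = sc (c * d) x"
  using is_algebra by (simp add: is_algebra_def)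

lemma sc_one [simp]: "sc 1 x = x"
  using is_algebra by (simp add: is_algebra_def)

lemma sc_mult_left: "sc c (x * y) = sc c x * y"
  using is_algebra by (simp add: is_algebra_def)

lemma sc_mult_right: "sc c (x * y) = x * sc c y"
  using is_algebra unfolding is_algebra_def by blast

definition scalar :: "'k \<Rightarrow> 'a" where
  "scalar c = sc c 1"

lemma sc_eq_scalar_mult: "sc c x = scalar c * x"
  using sc_mult_left[of c 1 x] by (simp add: scalar_def)

lemma sc_eq_mult_scalar: "sc c x = x * scalar c"
  using sc_mult_right[of c x 1] by (simp add: scalar_def)

lemma scalar_commute: "scalar c * x = x * scalar c"
  by (simp only: sc_eq_scalar_mult[symmetric] sc_eq_mult_scalar[symmetric])

lemma scalar_add: "scalar (c + d) = scalar c + scalar d"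
  by (simp add: scalar_def sc_add_left)

lemma scalar_1 [simp]: "scalar 1 = 1"
  by (simp add: scalar_def)

lemma scalar_0 [simp]: "scalar 0 = 0"
  using scalar_add[of 0 0] by simp

lemma scalar_minus: "scalar (- c) = - scalar c"
  using scalar_add[of "- c" c] by (simp add: eq_neg_iff_add_eq_0)

lemma sc_0_left [simp]: "sc 0 x = 0"
  and sc_0_right [simp]: "sc c 0 = 0"
  by (simp_all add: sc_eq_scalar_mult)

lemma sc_minus_left: "sc (- c) x = - sc c x"
  by (simp add: sc_eq_scalar_mult scalar_minus)

lemma sc_sum_left: "sc (\<Sum>i\<in>I. c i) x = (\<Sum>i\<in>I. sc (c i) x)"
  by (induction I rule: infinite_finite_induct) (simp_all add: sc_add_left)

lemma sc_sum_right: "sc c (\<Sum>i\<in>I. f i) = (\<Sum>i\<in>I. sc c (f i))"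
  by (induction I rule: infinite_finite_induct) (simp_all add: sc_add_right)

lemma sc_mult_sc: "sc c x * sc d y = sc (c * d) (x * y)"
proof -
  have "sc c x * sc d y = sc c (x * sc d y)" by (rule sc_mult_left[symmetric])
  also have "x * sc d y = sc d (x * y)" by (rule sc_mult_right[symmetric])
  finally show ?thesis by (simp add: sc_sc)
qed

lemma sc_cancel_right:
  assumes "z \<noteq> 0" and "sc c z = sc d z"
  shows "c = d"
proof (rule ccontr)
  assume "c \<noteq> d"
  have "sc (c - d) z = 0"
    using assms(2) sc_add_left[of "c - d" d z] by simp
  then have "sc (inverse (c - d) * (c - d)) z = 0"
    by (simp add: sc_sc[symmetric])
  then show False using \<open>c \<noteq> d\<close> assms(1) by simp
qed

lemma sc_eq_0_iff: "z \<noteq> 0 \<Longrightarrow> sc c z = 0 \<longleftrightarrow> c = 0"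
  using sc_cancel_right[of z c 0] by auto

lemma sc_proportional:
  assumes "x = sc c w" and "y = sc d w" and "y \<noteq> 0"
  shows "x = sc (c * inverse d) y"
  using assms by (cases "d = 0") (simp_all add: sc_sc mult.assoc)

end

locale graded_space = scalar_algebra sc
  for sc :: "'k::field \<Rightarrow> 'a::ring_1 \<Rightarrow> 'a" +
  fixes Agr :: "'g \<Rightarrow> 'a set"
  assumes vs_grading: "vs_grading sc Agr"
begin

lemma zero_in_Agr [simp]: "0 \<in> Agr s"
  and Agr_add: "x \<in> Agr s \<Longrightarrow> y \<in> Agr s \<Longrightarrow> x + y \<in> Agr s"
  and Agr_sc: "x \<in> Agr s \<Longrightarrow> sc c x \<in> Agr s"
  using vs_grading by (auto simp: vs_grading_def subspace_of_def)

lemma Agr_scalar_mult: "x \<in> Agr s \<Longrightarrow> scalar c * x \<in> Agr s"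
  using Agr_sc by (simp add: sc_eq_scalar_mult)

lemma Agr_uminus: "x \<in> Agr s \<Longrightarrow> - x \<in> Agr s"
  using Agr_sc[of x s "- 1"] by (simp add: sc_minus_left)

lemma Agr_diff: "x \<in> Agr s \<Longrightarrow> y \<in> Agr s \<Longrightarrow> x - y \<in> Agr s"
  using Agr_add Agr_uminus by (metis diff_conv_add_uminus)

lemma Agr_sum: "(\<And>i. i \<in> I \<Longrightarrow> f i \<in> Agr s) \<Longrightarrow> sum f I \<in> Agr s"
  by (induction I rule: infinite_finite_induct) (simp_all add: Agr_add)

definition decomposition :: "'a \<Rightarrow> ('g \<Rightarrow> 'a) \<Rightarrow> bool" where
  "decomposition a c \<longleftrightarrow> finite {\<sigma>. c \<sigma> \<noteq> 0} \<and> (\<forall>\<sigma>. c \<sigma> \<in> Agr \<sigma>) \<and> a = (\<Sum>\<sigma>\<in>{\<sigma>. c \<sigma> \<noteq> 0}. c \<sigma>)"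

definition component :: "'a \<Rightarrow> 'g \<Rightarrow> 'a" where
  "component a = (THE c. decomposition a c)"

lemma ex1_decomposition: "\<exists>!c. decomposition a c"
  using vs_grading unfolding vs_grading_def decomposition_def by blast

lemma decomposition_component: "decomposition a (component a)"
  unfolding component_def using ex1_decomposition by (rule theI')

lemma finite_component: "finite {\<sigma>. component a \<sigma> \<noteq> 0}"
  and component_in_Agr: "component a s \<in> Agr s"
  and sum_component: "(\<Sum>\<sigma>\<in>{\<sigma>. component a \<sigma> \<noteq> 0}. component a \<sigma>) = a"
  using decomposition_component unfolding decomposition_def by auto

lemma sum_component_superset:
  assumes "finite D" and "{\<sigma>. component a \<sigma> \<noteq> 0} \<subseteq> D"
  shows "(\<Sum>\<sigma>\<in>D. component a \<sigma>) = a"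
  using sum.mono_neutral_left[OF assms, of "component a"] sum_component[of a] by simp

lemma component_sum_Agr:
  assumes "finite D" and "\<And>s. s \<in> D \<Longrightarrow> f s \<in> Agr s"
  shows "component (\<Sum>s\<in>D. f s) t = (if t \<in> D then f t else 0)"
proof -
  define c where "c s = (if s \<in> D then f s else 0)" for s
  have supp: "{s. c s \<noteq> 0} \<subseteq> D" by (auto simp: c_def split: if_splits)
  have "(\<Sum>s\<in>D. f s) = (\<Sum>s\<in>D. c s)" by (simp add: c_def)
  also have "\<dots> = (\<Sum>s\<in>{s. c s \<noteq> 0}. c s)"
    by (rule sum.mono_neutral_right[OF assms(1) supp]) auto
  finally have "(\<Sum>s\<in>D. f s) = (\<Sum>s\<in>{s. c s \<noteq> 0}. c s)" .
  then have "decomposition (\<Sum>s\<in>D. f s) c"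
    unfolding decomposition_def using assms supp finite_subset by (auto simp: c_def)
  then have "component (\<Sum>s\<in>D. f s) = c"
    using ex1_decomposition decomposition_component by blast
  then show ?thesis by (simp add: c_def)
qed

lemma component_Agr: "x \<in> Agr s \<Longrightarrow> component x t = (if t = s then x else 0)"
  using component_sum_Agr[of "{s}" "\<lambda>_. x" t] by simp

lemma component_add: "component (x + y) t = component x t + component y t"
proof -
  let ?D = "{\<sigma>. component x \<sigma> \<noteq> 0} \<union> {\<sigma>. component y \<sigma> \<noteq> 0}"
  have "finite ?D" using finite_component by simp
  have "x + y = (\<Sum>s\<in>?D. component x s + component y s)"
    using sum_component_superset[OF \<open>finite ?D\<close>] by (simp add: sum.distrib)
  then have "component (x + y) t = (if t \<in> ?D then component x t + component y t else 0)"
    using component_sum_Agr[OF \<open>finite ?D\<close>] by (simp add: component_in_Agr Agr_add)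
  then show ?thesis by auto
qed

lemma component_0 [simp]: "component 0 t = 0"
  using component_Agr[of 0 t t] by simp

lemma component_sum: "component (\<Sum>i\<in>I. a i) t = (\<Sum>i\<in>I. component (a i) t)"
  by (induction I rule: infinite_finite_induct) (auto simp: component_add)

lemma component_sum_graded:
  assumes "\<And>i. i \<in> I \<Longrightarrow> a i \<in> Agr (d i)"
  shows "component (\<Sum>i\<in>I. a i) t = (\<Sum>i\<in>I. if d i = t then a i else 0)"
  unfolding component_sum by (intro sum.cong refl) (simp add: component_Agr[OF assms] eq_commute)

lemma component_sc: "component (sc c a) t = sc c (component a t)"
proof -
  have "sc c a = (\<Sum>\<sigma>\<in>{\<sigma>. component a \<sigma> \<noteq> 0}. sc c (component a \<sigma>))"
    using sum_component[of a] by (metis sc_sum_right)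
  then show ?thesis
    using component_sum_Agr[of "{\<sigma>. component a \<sigma> \<noteq> 0}" "\<lambda>\<sigma>. sc c (component a \<sigma>)" t]
      finite_component
    by (auto simp: component_in_Agr Agr_sc)
qed

lemma in_Agr_iff_component: "x \<in> Agr s \<longleftrightarrow> (\<forall>t. t \<noteq> s \<longrightarrow> component x t = 0)"
proof
  assume "\<forall>t. t \<noteq> s \<longrightarrow> component x t = 0"
  then have "component x s = x"
    using sum_component_superset[of "{s}" x] by auto
  then show "x \<in> Agr s" using component_in_Agr[of x s] by simp
qed (simp add: component_Agr)

lemma sum_Agr_eq_0:
  assumes "finite M" and "inj_on d M" and "\<And>m. m \<in> M \<Longrightarrow> x m \<in> Agr (d m)"
    and "(\<Sum>m\<in>M. x m) = 0" and "m \<in> M"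
  shows "x m = 0"
proof -
  have "0 = (\<Sum>n\<in>M. if d n = d m then x n else 0)"
    using component_sum_graded[of M x d "d m"] assms(3,4) by simp
  also have "\<dots> = (\<Sum>n\<in>M. if n = m then x n else 0)"
    using assms(2,5) by (intro sum.cong) (auto dest: inj_onD)
  finally show ?thesis using assms(1,5) by simp
qed

end

section \<open>Jordan tori are twisted group algebras\<close>

locale jordan_torus_algebra = graded_space sc Agr
  for sc :: "'k::field_char_0 \<Rightarrow> 'a::ring_1 \<Rightarrow> 'a" and Agr :: "'g::ab_group_add \<Rightarrow> 'a set" +
  assumes torsion_free: "torsion_free TYPE('g)"
    and jordan_torus: "jordan_torus sc Agr"
begin

definition half :: 'a where
  "half = scalar (inverse 2)"

lemma half_add_half: "half + half = 1"
proof -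
  have "half + half = scalar (inverse 2 + inverse 2)"
    by (simp only: half_def scalar_add)
  also have "inverse (2::'k) + inverse 2 = 1" by simp
  finally show ?thesis by simp
qed

lemma half_double: "half * z + half * z = z"
  by (simp only: distrib_right[symmetric] half_add_half mult_1_left)

lemma jprod_eq: "jprod sc a b = half * (a * b + b * a)"
  by (simp add: jprod_def half_def sc_eq_scalar_mult)

lemma jprod_self: "jprod sc a a = a * a"
  by (simp add: jprod_eq distrib_left half_double)

lemma jprod_one_right: "jprod sc x 1 = x"
  by (simp add: jprod_eq distrib_left half_double)

lemma jprod_sum_right: "jprod sc x (\<Sum>i\<in>I. f i) = (\<Sum>i\<in>I. jprod sc x (f i))"
  by (simp add: jprod_eq sum_distrib_left sum_distrib_right sum.distrib distrib_left)

lemma jprod_sum_left: "jprod sc (\<Sum>i\<in>I. f i) x = (\<Sum>i\<in>I. jprod sc (f i) x)"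
  by (simp add: jprod_eq sum_distrib_left sum_distrib_right sum.distrib distrib_left)

lemma jprod_in_Agr: "x \<in> Agr s \<Longrightarrow> y \<in> Agr t \<Longrightarrow> jprod sc x y \<in> Agr (s + t)"
  using jordan_torus by (auto simp: jordan_torus_def jordan_grading_def)

lemma homogeneous_invertible:
  assumes "x \<in> Agr s" and "x \<noteq> 0"
  shows "invertible x"
proof -
  obtain y where "jprod sc x y = 1" and "jprod sc (jprod sc x x) y = x"
    using jordan_torus assms unfolding jordan_torus_def jordan_invertible_def by blast
  then have "x * y + y * x = 1 + 1" and "x * x * y + y * (x * x) = x + x"
    by (metis jprod_eq jprod_self half_double)+
  then show ?thesis
    using jordan_inverse_imp_inverse[OF half_add_half, of x y] unfolding invertible_def by blast
qed

lemma homogeneous_mult_nonzero: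
  "x \<in> Agr s \<Longrightarrow> x \<noteq> 0 \<Longrightarrow> y \<in> Agr t \<Longrightarrow> y \<noteq> 0 \<Longrightarrow> x * y \<noteq> 0"
  using homogeneous_invertible invertible_mult invertible_nonzero by blast

lemma component_sum_translate:
  assumes "finite D" and "\<And>\<rho>. \<rho> \<in> D \<Longrightarrow> f \<rho> \<in> Agr (s + \<rho>)"
  shows "component (\<Sum>\<rho>\<in>D. f \<rho>) (s + r) = (if r \<in> D then f r else 0)"
  using component_sum_graded[of D f "\<lambda>\<rho>. s + \<rho>" "s + r"] assms by simp

text \<open>The quadratic operator \<open>U\<^sub>x z = x z x\<close> is a Jordan expression, so it respects the grading.\<close>
lemma U_eq_jprod:
  "x * z * x = jprod sc x (jprod sc x z) + jprod sc x (jprod sc x z) - jprod sc (jprod sc x x) z"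
proof -
  have commute: "x * (half * w) = half * (x * w)" for w
    by (metis half_def mult.assoc scalar_commute)
  have "jprod sc x (jprod sc x z) = half * (half * ((x * x * z + z * x * x) + (x * z * x + x * z * x)))"
    by (simp add: jprod_eq commute mult.assoc algebra_simps)
  then have "jprod sc x (jprod sc x z) + jprod sc x (jprod sc x z)
      = half * ((x * x * z + z * x * x) + (x * z * x + x * z * x))"
    by (simp only: half_double)
  also have "\<dots> = half * (x * x * z + z * x * x) + x * z * x"
    by (simp only: distrib_left half_double)
  finally have "jprod sc x (jprod sc x z) + jprod sc x (jprod sc x z)
      = half * (x * x * z + z * x * x) + x * z * x" .
  moreover have "half * (x * x * z + z * x * x) = jprod sc (jprod sc x x) z"
    by (simp add: jprod_self jprod_eq mult.assoc)
  ultimately show ?thesis by simp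
qed

lemma U_in_Agr:
  assumes "x \<in> Agr s" and "z \<in> Agr t"
  shows "x * z * x \<in> Agr (s + s + t)"
proof -
  have "jprod sc x (jprod sc x z) \<in> Agr (s + s + t)"
    using jprod_in_Agr[OF assms(1) jprod_in_Agr[OF assms]] by (simp add: add.assoc)
  moreover have "jprod sc (jprod sc x x) z \<in> Agr (s + s + t)"
    using jprod_in_Agr[OF jprod_in_Agr[OF assms(1) assms(1)] assms(2)] .
  ultimately show ?thesis unfolding U_eq_jprod by (intro Agr_diff Agr_add)
qed

lemma one_in_Agr_0: "1 \<in> Agr 0"
proof -
  define D where "D = {\<sigma>. component 1 \<sigma> \<noteq> 0}"
  have "finite D" by (simp add: D_def finite_component)
  have vanish: "jprod sc x (component 1 r) = 0" if x: "x \<in> Agr s" and "r \<noteq> 0" for x s r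
  proof -
    have "x = (\<Sum>\<rho>\<in>D. jprod sc x (component 1 \<rho>))"
      using jprod_sum_right[of x "component 1" D] sum_component[of 1]
      by (simp add: D_def jprod_one_right)
    then have "component x (s + r) = (if r \<in> D then jprod sc x (component 1 r) else 0)"
      using component_sum_translate[OF \<open>finite D\<close>] jprod_in_Agr[OF x component_in_Agr] by metis
    moreover have "component x (s + r) = 0"
      using component_Agr[OF x] \<open>r \<noteq> 0\<close> by simp
    ultimately show ?thesis by (cases "component 1 r = 0") (auto simp: D_def jprod_eq)
  qed
  have "component 1 r = 0" if "r \<noteq> 0" for r
  proof (rule ccontr)
    assume nz: "component 1 r \<noteq> 0"
    have "component 1 r * component 1 r = 0"
      using vanish[OF component_in_Agr[of 1 r] that] by (simp add: jprod_self)
    moreover have "invertible (component 1 r * component 1 r)"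
      using homogeneous_invertible[OF component_in_Agr nz] invertible_mult by blast
    ultimately show False using invertible_nonzero by blast
  qed
  then show ?thesis using in_Agr_iff_component by blast
qed

lemma inverse_in_Agr:
  assumes x: "x \<in> Agr s" and "x * y = 1" and "y * x = 1"
  shows "y \<in> Agr (- s)"
proof -
  define D where "D = {\<sigma>. component y \<sigma> \<noteq> 0}"
  have "finite D" by (simp add: D_def finite_component)
  have "invertible x" using assms by (auto simp: invertible_def)
  have "component y r = 0" if "r \<noteq> - s" for r
  proof (cases "r \<in> D")
    case True
    have "x = x * y * x" using assms by simp
    also have "\<dots> = x * (\<Sum>\<rho>\<in>D. component y \<rho>) * x"
      using sum_component[of y] by (simp add: D_def)
    also have "\<dots> = (\<Sum>\<rho>\<in>D. x * component y \<rho> * x)"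
      by (simp add: sum_distrib_left sum_distrib_right)
    finally have "component x ((s + s) + r) = x * component y r * x"
      using component_sum_translate[OF \<open>finite D\<close>] U_in_Agr[OF x component_in_Agr] True by metis
    moreover have "(s + s) + r \<noteq> s"
      using that by (metis add.commute add_diff_cancel_left' diff_minus_eq_add minus_add_cancel)
    ultimately have "x * (component y r * x) = 0"
      using component_Agr[OF x] by (simp add: mult.assoc)
    then show ?thesis
      using invertible_mult_left_eq_0 invertible_mult_right_eq_0 \<open>invertible x\<close> by blast
  qed (simp add: D_def)
  then show ?thesis using in_Agr_iff_component by blast
qed

text \<open>Torsion-freeness of the grading group is used here: the extreme points \<open>m\<close> of the support
  of \<open>u\<close> contribute \<open>u\<^sub>m\<^sup>2 \<noteq> 0\<close> in degree \<open>2m\<close>, so \<open>2m = 2t\<close>.\<close>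
lemma square_root_in_Agr:
  assumes "u * u \<in> Agr (t + t)"
  shows "u \<in> Agr t"
proof -
  define D where "D = {\<sigma>. component u \<sigma> \<noteq> 0}"
  have "finite D" by (simp add: D_def finite_component)
  have "D \<subseteq> {t}"
  proof (rule extreme_points_singleton[OF torsion_free \<open>finite D\<close>])
    fix m assume "extreme_point D m"
    then have "m \<in> D" and extreme: "\<And>a b. a \<in> D \<Longrightarrow> b \<in> D \<Longrightarrow> a + b = m + m \<Longrightarrow> a = m \<and> b = m"
      unfolding extreme_point_def by auto
    let ?f = "\<lambda>p. jprod sc (component u (fst p)) (component u (snd p))"
    have "u * u = jprod sc (\<Sum>a\<in>D. component u a) (\<Sum>b\<in>D. component u b)"
      using sum_component[of u] by (simp add: D_def jprod_self)
    also have "\<dots> = (\<Sum>a\<in>D. \<Sum>b\<in>D. jprod sc (component u a) (component u b))"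
      by (subst jprod_sum_left) (simp add: jprod_sum_right)
    also have "\<dots> = (\<Sum>p\<in>D \<times> D. ?f p)"
      by (simp add: sum.cartesian_product split_def)
    finally have "component (u * u) (m + m) = (\<Sum>p\<in>D \<times> D. if fst p + snd p = m + m then ?f p else 0)"
      using component_sum_graded[of "D \<times> D" ?f "\<lambda>p. fst p + snd p"]
      by (simp add: jprod_in_Agr component_in_Agr)
    also have "\<dots> = (\<Sum>p\<in>{(m, m)}. if fst p + snd p = m + m then ?f p else 0)"
      using \<open>finite D\<close> \<open>m \<in> D\<close> extreme by (intro sum.mono_neutral_right) auto
    finally have "component (u * u) (m + m) = component u m * component u m"
      by (simp add: jprod_self)
    moreover have "component u m * component u m \<noteq> 0"
      using \<open>m \<in> D\<close> homogeneous_mult_nonzero[OF component_in_Agr _ component_in_Agr]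
      by (simp add: D_def)
    ultimately have "m + m = t + t"
      using component_Agr[OF assms, of "m + m"] by (auto split: if_splits)
    then show "m = t" by (rule torsion_free_double_cancel[OF torsion_free])
  qed
  then show ?thesis using in_Agr_iff_component by (auto simp: D_def)
qed

text \<open>\<open>A\<^sup>+\<close> being graded only controls \<open>x y + y x\<close>; the commutator \<open>d = x y - y x\<close> is
  homogeneous because its square \<open>(x y + y x)\<^sup>2 - 2 (x y\<^sup>2 x + y x\<^sup>2 y)\<close> is.\<close>
lemma mult_in_Agr:
  assumes x: "x \<in> Agr s" and y: "y \<in> Agr t"
  shows "x * y \<in> Agr (s + t)"
proof -
  define S where "S = x * y + y * x"
  define d where "d = x * y - y * x"
  have S: "S \<in> Agr (s + t)"
    using Agr_add[OF jprod_in_Agr[OF x y] jprod_in_Agr[OF x y]] by (simp add: jprod_eq half_double S_def)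
  have "x * (y * y) * x \<in> Agr ((s + t) + (s + t))" "y * (x * x) * y \<in> Agr ((s + t) + (s + t))"
    using U_in_Agr[OF x jprod_in_Agr[OF y y]] U_in_Agr[OF y jprod_in_Agr[OF x x]]
    by (simp_all add: jprod_self algebra_simps)
  moreover have "S * S \<in> Agr ((s + t) + (s + t))"
    using jprod_in_Agr[OF S S] by (simp add: jprod_self)
  moreover have "d * d = S * S - (x * (y * y) * x + y * (x * x) * y + (x * (y * y) * x + y * (x * x) * y))"
    by (simp add: S_def d_def algebra_simps)
  ultimately have "d * d \<in> Agr ((s + t) + (s + t))"
    by (simp add: Agr_add Agr_diff)
  then have "d \<in> Agr (s + t)" by (rule square_root_in_Agr)
  moreover have "x * y = half * (S + d)"
    using half_double[of "x * y"] by (simp add: S_def d_def distrib_left)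
  ultimately show ?thesis using S by (simp add: half_def Agr_scalar_mult Agr_add)
qed

lemma Agr_nontrivial: "\<exists>x\<in>Agr s. x \<noteq> 0"
proof -
  let ?S = "{\<sigma>. Agr \<sigma> \<noteq> {0}}"
  have mem: "\<sigma> \<in> ?S \<longleftrightarrow> (\<exists>x\<in>Agr \<sigma>. x \<noteq> 0)" for \<sigma>
    using zero_in_Agr by blast
  have "add_subgroup ?S"
    unfolding add_subgroup_def
  proof (intro conjI ballI)
    show "0 \<in> ?S" unfolding mem using one_in_Agr_0 by (intro bexI[of _ 1]) simp_all
  next
    fix a b assume "a \<in> ?S" "b \<in> ?S"
    then obtain x y where "x \<in> Agr a" "x \<noteq> 0" "y \<in> Agr b" "y \<noteq> 0" unfolding mem by blast
    then show "a + b \<in> ?S" unfolding mem using mult_in_Agr homogeneous_mult_nonzero by blast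
  next
    fix a assume "a \<in> ?S"
    then obtain x where x: "x \<in> Agr a" "x \<noteq> 0" unfolding mem by blast
    then obtain y where "x * y = 1" "y * x = 1"
      using homogeneous_invertible by (auto simp: invertible_def)
    then have "y \<in> Agr (- a)" "y \<noteq> 0" using inverse_in_Agr[OF x(1)] by auto
    then show "- a \<in> ?S" unfolding mem by blast
  qed
  moreover have "generates_group ?S"
    using jordan_torus by (simp add: jordan_torus_def)
  ultimately show ?thesis
    unfolding generates_group_def mem[symmetric] by blast
qed

definition hbasis :: "'g \<Rightarrow> 'a" where
  "hbasis s = (SOME x. x \<in> Agr s \<and> x \<noteq> 0)"

lemma hbasis_in_Agr: "hbasis s \<in> Agr s"
  and hbasis_nonzero: "hbasis s \<noteq> 0"
  using someI_ex[OF Agr_nontrivial[of s, unfolded Bex_def]] by (auto simp: hbasis_def)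

lemma Agr_proportional:
  assumes "x \<in> Agr s" and "y \<in> Agr s" and "y \<noteq> 0"
  shows "\<exists>c. x = sc c y"
proof -
  obtain w where "Agr s \<subseteq> range (\<lambda>c. sc c w)"
    using jordan_torus unfolding jordan_torus_def by blast
  then obtain c d where "x = sc c w" "y = sc d w" using assms by blast
  then show ?thesis using sc_proportional assms(3) by blast
qed

definition coord :: "'a \<Rightarrow> 'g \<Rightarrow> 'k" where
  "coord a s = (SOME c. component a s = sc c (hbasis s))"

lemma component_eq_coord: "component a s = sc (coord a s) (hbasis s)"
  unfolding coord_def
  by (rule someI_ex, rule Agr_proportional[OF component_in_Agr hbasis_in_Agr hbasis_nonzero])

lemma coord_eqI:
  assumes "component a s = sc c (hbasis s)"
  shows "coord a s = c"
  using sc_cancel_right[OF hbasis_nonzero, of "coord a s" s c] component_eq_coord[of a s] assms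
  by simp

lemma coord_eq_0_iff: "coord a s = 0 \<longleftrightarrow> component a s = 0"
  using component_eq_coord[of a s] sc_eq_0_iff[OF hbasis_nonzero, of "coord a s" s] by simp

lemma sum_coord: "(\<Sum>\<sigma>\<in>{\<sigma>. coord a \<sigma> \<noteq> 0}. sc (coord a \<sigma>) (hbasis \<sigma>)) = a"
  using sum_component[of a] by (simp add: coord_eq_0_iff component_eq_coord[symmetric])

lemma coord_add: "coord (a + b) s = coord a s + coord b s"
  by (rule coord_eqI)
    (simp only: component_add component_eq_coord[of a s] component_eq_coord[of b s] sc_add_left)

lemma coord_sc: "coord (sc c a) s = c * coord a s"
  by (rule coord_eqI) (simp only: component_sc component_eq_coord[of a s] sc_sc)

lemma fsupp_coord: "fsupp (coord a)"
  unfolding fsupp_def using finite_component[of a] by (simp add: coord_eq_0_iff)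

lemma coord_inject:
  assumes "coord a = coord b"
  shows "a = b"
proof -
  have "(\<Sum>\<sigma>\<in>{\<sigma>. coord b \<sigma> \<noteq> 0}. sc (coord b \<sigma>) (hbasis \<sigma>)) = a"
    using sum_coord[of a] unfolding assms .
  then show ?thesis by (simp only: sum_coord)
qed

lemma coord_sum_hbasis:
  assumes "finite D"
  shows "coord (\<Sum>\<sigma>\<in>D. sc (f \<sigma>) (hbasis \<sigma>)) t = (if t \<in> D then f t else 0)"
  by (rule coord_eqI)
    (simp add: component_sum_Agr[OF assms] Agr_sc hbasis_in_Agr)

lemma coord_surj:
  assumes "fsupp f"
  shows "\<exists>a. coord a = f"
proof
  show "coord (\<Sum>\<sigma>\<in>{\<sigma>. f \<sigma> \<noteq> 0}. sc (f \<sigma>) (hbasis \<sigma>)) = f"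
    using assms coord_sum_hbasis[of "{\<sigma>. f \<sigma> \<noteq> 0}" f] by (auto simp: fsupp_def)
qed

definition twist :: "'g \<Rightarrow> 'g \<Rightarrow> 'k" where
  "twist s t = (SOME c. hbasis s * hbasis t = sc c (hbasis (s + t)))"

lemma hbasis_mult: "hbasis s * hbasis t = sc (twist s t) (hbasis (s + t))"
  unfolding twist_def
  by (rule someI_ex, rule Agr_proportional[OF mult_in_Agr hbasis_in_Agr hbasis_nonzero])
    (rule hbasis_in_Agr)+

lemma twist_nonzero: "twist s t \<noteq> 0"
  using hbasis_mult[of s t] homogeneous_mult_nonzero[OF hbasis_in_Agr hbasis_nonzero
      hbasis_in_Agr hbasis_nonzero] by auto

text \<open>The cocycle identity is associativity of \<open>hbasis s * hbasis t * hbasis m\<close>.\<close>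
lemma cocycle_twist: "cocycle twist"
  unfolding cocycle_def
proof (intro conjI allI)
  fix s t m
  have "(hbasis s * hbasis t) * hbasis m = sc (twist s t * twist (s + t) m) (hbasis (s + t + m))"
    by (simp add: hbasis_mult sc_sc flip: sc_mult_left)
  moreover have "hbasis s * (hbasis t * hbasis m)
      = sc (twist t m * twist s (t + m)) (hbasis (s + t + m))"
    by (simp add: hbasis_mult sc_sc add.assoc flip: sc_mult_right)
  ultimately have "sc (twist s t * twist (s + t) m) (hbasis (s + t + m))
      = sc (twist t m * twist s (t + m)) (hbasis (s + t + m))"
    by (simp add: mult.assoc)
  then have "twist s t * twist (s + t) m = twist t m * twist s (t + m)"
    by (rule sc_cancel_right[OF hbasis_nonzero])
  then show "twist (s + t) m * twist s t = twist s (t + m) * twist t m"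
    by (simp add: mult.commute)
qed (rule twist_nonzero)

lemma coord_mult: "coord (a * b) = tw_mult twist (coord a) (coord b)"
proof
  fix r
  define Da where "Da = {\<sigma>. coord a \<sigma> \<noteq> 0}"
  define Db where "Db = {\<sigma>. coord b \<sigma> \<noteq> 0}"
  have "finite Da" "finite Db"
    using fsupp_coord by (auto simp: fsupp_def Da_def Db_def)
  define W where "W s t = sc (coord a s * coord b t * twist s t) (hbasis (s + t))" for s t
  have "a * b = (\<Sum>s\<in>Da. sc (coord a s) (hbasis s)) * (\<Sum>t\<in>Db. sc (coord b t) (hbasis t))"
    by (simp only: Da_def Db_def sum_coord)
  also have "\<dots> = (\<Sum>s\<in>Da. \<Sum>t\<in>Db. sc (coord a s) (hbasis s) * sc (coord b t) (hbasis t))"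
    by (subst sum_distrib_right) (simp add: sum_distrib_left)
  also have "\<dots> = (\<Sum>s\<in>Da. \<Sum>t\<in>Db. W s t)"
    by (simp add: W_def sc_mult_sc hbasis_mult sc_sc mult.assoc)
  moreover have W_in: "W s t \<in> Agr (s + t)" for s t
    by (simp add: W_def Agr_sc hbasis_in_Agr)
  ultimately have "component (a * b) r = (\<Sum>s\<in>Da. \<Sum>t\<in>Db. if s + t = r then W s t else 0)"
    by (simp add: component_sum component_Agr[OF W_in] eq_commute[of r])
  also have "\<dots> = sc (\<Sum>s\<in>Da. \<Sum>t\<in>Db. if s + t = r then twist s t * coord a s * coord b t else 0)
      (hbasis r)"
    by (simp add: sc_sum_left W_def mult_ac if_distrib[of "\<lambda>c. sc c _"] cong: if_cong)
  finally show "coord (a * b) r = tw_mult twist (coord a) (coord b) r"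
    unfolding tw_mult_def Da_def Db_def by (rule coord_eqI)
qed

lemma coord_image_Agr: "coord ` Agr s = {f. \<forall>t. t \<noteq> s \<longrightarrow> f t = 0}"
proof (intro set_eqI iffI)
  fix f assume "f \<in> coord ` Agr s"
  then show "f \<in> {f. \<forall>t. t \<noteq> s \<longrightarrow> f t = 0}"
    by (auto simp: coord_eq_0_iff component_Agr)
next
  fix f :: "'g \<Rightarrow> 'k" assume "f \<in> {f. \<forall>t. t \<noteq> s \<longrightarrow> f t = 0}"
  then have "coord (sc (f s) (hbasis s)) = f"
    using coord_sum_hbasis[of "{s}" f] by (auto simp: fun_eq_iff)
  moreover have "sc (f s) (hbasis s) \<in> Agr s"
    by (simp add: Agr_sc hbasis_in_Agr)
  ultimately show "f \<in> coord ` Agr s" by (metis image_eqI)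
qed

lemma graded_iso_twisted_twist: "graded_iso_twisted sc Agr twist"
  unfolding graded_iso_twisted_def
proof (intro exI[of _ coord] conjI allI)
  have "range coord = {f. fsupp f}"
    using fsupp_coord coord_surj by blast
  then show "bij_betw coord UNIV {f. fsupp f}"
    using coord_inject by (auto simp: bij_betw_def intro: inj_onI)
qed (simp_all add: fun_eq_iff coord_add coord_sc coord_mult coord_image_Agr)

end

section \<open>The free algebra on the letters \<open>y\<^sub>i\<close>, \<open>y\<^sub>i\<^sup>-\<^sup>1\<close>\<close>

definition free_single :: "('i + 'i) list \<Rightarrow> ('i + 'i) list \<Rightarrow> 'k::field" where
  "free_single a = (\<lambda>w. if w = a then 1 else 0)"

lemma fsupp_free_single: "fsupp (free_single a)"
  unfolding fsupp_def free_single_def by (simp add: Collect_conv_if)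

lemma fsupp_zero: "fsupp (\<lambda>w. 0)"
  by (simp add: fsupp_def)

lemma fsupp_add_scaled:
  fixes f g :: "'b \<Rightarrow> 'k::field"
  assumes "fsupp f" and "fsupp g"
  shows "fsupp (\<lambda>w. f w + c * g w)"
proof -
  have "{w. f w + c * g w \<noteq> 0} \<subseteq> {w. f w \<noteq> 0} \<union> {w. g w \<noteq> 0}" by auto
  then show ?thesis using assms unfolding fsupp_def by (auto intro: finite_subset)
qed

lemma fsupp_add: "fsupp f \<Longrightarrow> fsupp g \<Longrightarrow> fsupp (\<lambda>w. f w + g w :: 'k::field)"
  using fsupp_add_scaled[of f g 1] by simp

lemma fsupp_scaled: "fsupp f \<Longrightarrow> fsupp (\<lambda>w. c * f w :: 'k::field)"
  using fsupp_add_scaled[OF fsupp_zero, of f c] by simp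

lemma supp_free_mult:
  "{w. free_mult f g w \<noteq> 0} \<subseteq> (\<lambda>(u, v). u @ v) ` ({u. f u \<noteq> 0} \<times> {v. g v \<noteq> 0})"
proof
  fix w assume "w \<in> {w. free_mult f g w \<noteq> 0}"
  then have "(\<Sum>u\<in>{u. f u \<noteq> 0}. \<Sum>v\<in>{v. g v \<noteq> 0}. if u @ v = w then f u * g v else 0) \<noteq> 0"
    by (simp add: free_mult_def)
  then obtain u where u: "u \<in> {u. f u \<noteq> 0}"
    and "(\<Sum>v\<in>{v. g v \<noteq> 0}. if u @ v = w then f u * g v else 0) \<noteq> 0"
    by (rule sum.not_neutral_contains_not_neutral)
  from this(2) obtain v where "v \<in> {v. g v \<noteq> 0}" and "(if u @ v = w then f u * g v else 0) \<noteq> 0"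
    by (rule sum.not_neutral_contains_not_neutral)
  with u show "w \<in> (\<lambda>(u, v). u @ v) ` ({u. f u \<noteq> 0} \<times> {v. g v \<noteq> 0})"
    by (auto split: if_splits)
qed

lemma fsupp_free_mult: "fsupp f \<Longrightarrow> fsupp g \<Longrightarrow> fsupp (free_mult f g)"
  unfolding fsupp_def by (rule finite_subset[OF supp_free_mult]) simp

lemma free_mult_superset:
  assumes "finite U" and "{u. f u \<noteq> 0} \<subseteq> U" and "finite V" and "{v. g v \<noteq> 0} \<subseteq> V"
  shows "free_mult f g w = (\<Sum>u\<in>U. \<Sum>v\<in>V. if u @ v = w then f u * g v else 0)"
proof -
  have "free_mult f g w = (\<Sum>u\<in>U. \<Sum>v\<in>{v. g v \<noteq> 0}. if u @ v = w then f u * g v else 0)"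
    unfolding free_mult_def by (rule sum.mono_neutral_left[OF assms(1,2)]) (simp add: sum.neutral)
  also have "\<dots> = (\<Sum>u\<in>U. \<Sum>v\<in>V. if u @ v = w then f u * g v else 0)"
    by (intro sum.cong refl sum.mono_neutral_left[OF assms(3,4)]) auto
  finally show ?thesis .
qed

lemma if_add_scaled:
  fixes a b x c :: "'k::field"
  shows "(if P then (a + c * b) * x else 0) = (if P then a * x else 0) + c * (if P then b * x else 0)"
  and "(if P then x * (a + c * b) else 0) = (if P then x * a else 0) + c * (if P then x * b else 0)"
  by (simp_all add: algebra_simps)

lemma free_mult_add_scaled_left:
  assumes "fsupp f" and "fsupp g" and "fsupp h"
  shows "free_mult (\<lambda>w. f w + c * g w) h = (\<lambda>w. free_mult f h w + c * free_mult g h w)"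
proof
  fix w
  let ?U = "{u. f u \<noteq> 0} \<union> {u. g u \<noteq> 0}" and ?V = "{v. h v \<noteq> 0}"
  have U: "finite ?U" and V: "finite ?V" using assms by (simp_all add: fsupp_def)
  have "free_mult (\<lambda>w. f w + c * g w) h w
      = (\<Sum>u\<in>?U. \<Sum>v\<in>?V. if u @ v = w then (f u + c * g u) * h v else 0)"
    by (rule free_mult_superset[OF U _ V]) auto
  also have "\<dots> = (\<Sum>u\<in>?U. \<Sum>v\<in>?V. if u @ v = w then f u * h v else 0)
      + c * (\<Sum>u\<in>?U. \<Sum>v\<in>?V. if u @ v = w then g u * h v else 0)"
    by (simp only: if_add_scaled sum.distrib sum_distrib_left)
  also have "\<dots> = free_mult f h w + c * free_mult g h w"
    by (simp only: free_mult_superset[OF U _ V] Un_upper1 Un_upper2 subset_refl)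
  finally show "free_mult (\<lambda>w. f w + c * g w) h w = free_mult f h w + c * free_mult g h w" .
qed

lemma free_mult_add_scaled_right:
  assumes "fsupp f" and "fsupp g" and "fsupp h"
  shows "free_mult h (\<lambda>w. f w + c * g w) = (\<lambda>w. free_mult h f w + c * free_mult h g w)"
proof
  fix w
  let ?U = "{u. h u \<noteq> 0}" and ?V = "{v. f v \<noteq> 0} \<union> {v. g v \<noteq> 0}"
  have U: "finite ?U" and V: "finite ?V" using assms by (simp_all add: fsupp_def)
  have "free_mult h (\<lambda>w. f w + c * g w) w
      = (\<Sum>u\<in>?U. \<Sum>v\<in>?V. if u @ v = w then h u * (f v + c * g v) else 0)"
    by (rule free_mult_superset[OF U _ V]) auto
  also have "\<dots> = (\<Sum>u\<in>?U. \<Sum>v\<in>?V. if u @ v = w then h u * f v else 0)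
      + c * (\<Sum>u\<in>?U. \<Sum>v\<in>?V. if u @ v = w then h u * g v else 0)"
    by (simp only: if_add_scaled sum.distrib sum_distrib_left)
  also have "\<dots> = free_mult h f w + c * free_mult h g w"
    by (simp only: free_mult_superset[OF U _ V] Un_upper1 Un_upper2 subset_refl)
  finally show "free_mult h (\<lambda>w. f w + c * g w) w = free_mult h f w + c * free_mult h g w" .
qed

lemma free_mult_single: "free_mult (free_single a) (free_single b) = (free_single (a @ b) :: _ \<Rightarrow> 'k::field)"
proof
  fix w
  have "free_mult (free_single a) (free_single b) w
      = (\<Sum>u\<in>{a}. \<Sum>v\<in>{b}. if u @ v = w then free_single a u * free_single b v else (0::'k))"
    by (rule free_mult_superset) (auto simp: free_single_def)
  then show "free_mult (free_single a) (free_single b) w = (free_single (a @ b) w :: 'k)"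
    by (simp add: free_single_def)
qed

definition is_free_ideal :: "(('i + 'i) list \<Rightarrow> 'k::field) set \<Rightarrow> bool" where
  "is_free_ideal J \<longleftrightarrow> J \<subseteq> {f. fsupp f} \<and> (\<lambda>w. 0) \<in> J \<and>
     (\<forall>f\<in>J. \<forall>g\<in>J. (\<lambda>w. f w + g w) \<in> J) \<and>
     (\<forall>c. \<forall>f\<in>J. (\<lambda>w. c * f w) \<in> J) \<and>
     (\<forall>f\<in>J. \<forall>g. fsupp g \<longrightarrow> free_mult g f \<in> J \<and> free_mult f g \<in> J)"

lemma free_ideal_eq_Inter: "free_ideal R = \<Inter>{J. is_free_ideal J \<and> R \<subseteq> J}"
  unfolding free_ideal_def is_free_ideal_def by (rule arg_cong[where f = Inter]) blast

lemma is_free_ideal_Int: "is_free_ideal J \<Longrightarrow> is_free_ideal K \<Longrightarrow> is_free_ideal (J \<inter> K)"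
  unfolding is_free_ideal_def by blast

definition letter_index :: "'i + 'i \<Rightarrow> 'i" where
  "letter_index l = (case l of Inl i \<Rightarrow> i | Inr i \<Rightarrow> i)"

definition letter_exponent :: "'i + 'i \<Rightarrow> 'i \<Rightarrow> int" where
  "letter_exponent l i = (case l of Inl j \<Rightarrow> if i = j then 1 else 0 | Inr j \<Rightarrow> if i = j then -1 else 0)"

fun exponents :: "('i + 'i) list \<Rightarrow> 'i \<Rightarrow> int" where
  "exponents [] = (\<lambda>i. 0)"
| "exponents (l # w) = (\<lambda>i. letter_exponent l i + exponents w i)"

text \<open>\<open>power_word i k\<close> is the word of \<open>y\<^sub>i\<^sup>k\<close>, and \<open>normal_word L e\<close> the word of the monomial
  \<open>\<Prod>\<^bsub>i \<in> L\<^esub> y\<^sub>i\<^bsup>e i\<^esub>\<close> taken in the order of the list \<open>L\<close>.\<close>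
definition power_word :: "'i \<Rightarrow> int \<Rightarrow> ('i + 'i) list" where
  "power_word i k = (if 0 \<le> k then replicate (nat k) (Inl i) else replicate (nat (- k)) (Inr i))"

definition normal_word :: "'i list \<Rightarrow> ('i \<Rightarrow> int) \<Rightarrow> ('i + 'i) list" where
  "normal_word L e = concat (map (\<lambda>i. power_word i (e i)) L)"

lemma letter_exponent_other: "i \<noteq> letter_index l \<Longrightarrow> letter_exponent l i = 0"
  by (cases l) (auto simp: letter_exponent_def letter_index_def)

lemma power_word_nonneg: "0 \<le> k \<Longrightarrow> power_word j k = replicate (nat k) (Inl j)"
  by (simp add: power_word_def)

lemma power_word_nonpos: "k \<le> 0 \<Longrightarrow> power_word j k = replicate (nat (- k)) (Inr j)"
  by (cases "k = 0") (auto simp: power_word_def)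

lemma normal_word_0: "normal_word L (\<lambda>i. 0) = []"
  by (induction L) (simp_all add: normal_word_def power_word_def)

lemma exponents_support: "{i. exponents w i \<noteq> 0} \<subseteq> letter_index ` set w"
proof (induction w)
  case (Cons l w)
  then show ?case using letter_exponent_other[of _ l] by fastforce
qed simp

lemma finite_exponents: "finite {i. exponents w i \<noteq> 0}"
  using exponents_support by (rule finite_subset) simp

lemma zmul_add_1: "zmul (k + 1) x = zmul k x + x"
proof (cases "0 \<le> k")
  case True
  then have "nat (k + 1) = Suc (nat k)" by simp
  then show ?thesis using True by (simp add: zmul_def natmul_Suc add.commute)
next
  case False
  show ?thesis
  proof (cases "k = -1")
    case False': False
    then have "nat (- k) = Suc (nat (- (k + 1)))" using False by simp
    then show ?thesis using False False' by (simp add: zmul_def natmul_Suc algebra_simps)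
  qed (simp add: zmul_def)
qed

lemma zmul_diff_1: "zmul (k - 1) x = zmul k x - x"
  using zmul_add_1[of "k - 1" x] by simp

definition int_combination :: "('i \<Rightarrow> 'g::ab_group_add) \<Rightarrow> ('i \<Rightarrow> int) \<Rightarrow> 'g" where
  "int_combination b e = (\<Sum>i\<in>{i. e i \<noteq> 0}. zmul (e i) (b i))"

lemma int_combination_superset:
  "finite S \<Longrightarrow> {i. e i \<noteq> 0} \<subseteq> S \<Longrightarrow> int_combination b e = (\<Sum>i\<in>S. zmul (e i) (b i))"
  unfolding int_combination_def by (rule sum.mono_neutral_left) (auto simp: zmul_def)

lemma word_deg_Nil [simp]: "word_deg b [] = 0"
  and word_deg_Cons: "word_deg b (l # w) = letter_deg b l + word_deg b w"
  and word_deg_append: "word_deg b (u @ w) = word_deg b u + word_deg b w"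
  by (simp_all add: word_deg_def)

lemma zmul_letter_exponent:
  "zmul (letter_exponent l i + k) (b i) = (if i = letter_index l then letter_deg b l else 0) + zmul k (b i)"
  by (cases l) (auto simp: letter_exponent_def letter_index_def letter_deg_def
      zmul_add_1[of k, simplified add.commute] zmul_diff_1)

lemma word_deg_eq_int_combination: "word_deg b w = int_combination b (exponents w)"
proof (induction w)
  case (Cons l w)
  let ?S = "letter_index ` set (l # w)"
  have S: "finite ?S" "{i. exponents (l # w) i \<noteq> 0} \<subseteq> ?S" "{i. exponents w i \<noteq> 0} \<subseteq> ?S"
    using exponents_support[of "l # w"] exponents_support[of w] by auto
  have "int_combination b (exponents (l # w)) = (\<Sum>i\<in>?S. zmul (exponents (l # w) i) (b i))"
    by (rule int_combination_superset[OF S(1,2)])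
  also have "\<dots> = (\<Sum>i\<in>?S. if i = letter_index l then letter_deg b l else 0)
      + (\<Sum>i\<in>?S. zmul (exponents w i) (b i))"
    by (simp add: zmul_letter_exponent sum.distrib)
  also have "\<dots> = letter_deg b l + (\<Sum>i\<in>?S. zmul (exponents w i) (b i))"
    using S(1) by simp
  also have "(\<Sum>i\<in>?S. zmul (exponents w i) (b i)) = int_combination b (exponents w)"
    by (rule int_combination_superset[OF S(1,3), symmetric])
  finally show ?case using Cons.IH by (simp add: word_deg_Cons)
qed (simp add: int_combination_def)

lemma free_basis_exponents_eq:
  assumes "free_basis b" and "word_deg b w1 = word_deg b w2"
  shows "exponents w1 = exponents w2"
proof -
  let ?P = "\<lambda>c. finite {i. c i \<noteq> 0} \<and> word_deg b w1 = (\<Sum>i\<in>{i. c i \<noteq> 0}. zmul (c i) (b i))"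
  have "\<exists>!c. ?P c" using assms(1) unfolding free_basis_def by blast
  moreover have "?P (exponents w1)" "?P (exponents w2)"
    using finite_exponents word_deg_eq_int_combination[of b] assms(2)
    by (simp_all add: int_combination_def)
  ultimately show ?thesis by blast
qed

lemma word_deg_power_word: "word_deg b (power_word i k) = zmul k (b i)"
proof -
  have "word_deg b (replicate n (Inl i)) = natmul n (b i)"
    and "word_deg b (replicate n (Inr i)) = - natmul n (b i)" for n
    by (induction n) (simp_all add: word_deg_Cons letter_deg_def natmul_Suc)
  then show ?thesis by (simp add: power_word_def zmul_def)
qed

lemma free_basis_ex_word:
  fixes b :: "'i \<Rightarrow> 'g::ab_group_add"
  assumes "free_basis b"
  shows "\<exists>w. word_deg b w = s"
proof -
  obtain c :: "'i \<Rightarrow> int" where c: "finite {i. c i \<noteq> 0}" "s = (\<Sum>i\<in>{i. c i \<noteq> 0}. zmul (c i) (b i))"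
    using assms unfolding free_basis_def by blast
  obtain L where L: "set L = {i. c i \<noteq> 0}" "distinct L"
    using finite_distinct_list[OF c(1)] by blast
  have "word_deg b (normal_word L c) = (\<Sum>i\<leftarrow>L. zmul (c i) (b i))"
    by (induction L) (simp_all add: normal_word_def word_deg_append word_deg_power_word)
  also have "\<dots> = s" using L c(2) by (simp add: sum_list_distinct_conv_sum_set)
  finally show ?thesis by blast
qed

section \<open>Words modulo the quantum torus relations\<close>

locale quantum_relations_ideal =
  fixes J :: "(('i + 'i) list \<Rightarrow> 'k::field) set" and q :: "'i \<Rightarrow> 'i \<Rightarrow> 'k"
  assumes is_free_ideal: "is_free_ideal J"
    and relations_subset: "qt_relations q \<subseteq> J"
    and q_nonzero: "\<And>i j. q i j \<noteq> 0"
begin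

lemma zero_in_J: "(\<lambda>w. 0) \<in> J"
  and J_add: "f \<in> J \<Longrightarrow> g \<in> J \<Longrightarrow> (\<lambda>w. f w + g w) \<in> J"
  and J_scaled: "f \<in> J \<Longrightarrow> (\<lambda>w. c * f w) \<in> J"
  and J_mult_left: "f \<in> J \<Longrightarrow> fsupp g \<Longrightarrow> free_mult g f \<in> J"
  and J_mult_right: "f \<in> J \<Longrightarrow> fsupp g \<Longrightarrow> free_mult f g \<in> J"
  using is_free_ideal by (simp_all add: is_free_ideal_def)

lemma J_sum: "finite S \<Longrightarrow> (\<And>s. s \<in> S \<Longrightarrow> F s \<in> J) \<Longrightarrow> (\<lambda>w. \<Sum>s\<in>S. F s w) \<in> J"
proof (induction S rule: finite_induct)
  case (insert x S)
  then show ?case using J_add[of "F x" "\<lambda>w. \<Sum>s\<in>S. F s w"] by simp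
qed (simp add: zero_in_J)

definition proportional :: "('i + 'i) list \<Rightarrow> ('i + 'i) list \<Rightarrow> bool" where
  "proportional a b \<longleftrightarrow> (\<exists>k. k \<noteq> 0 \<and> (\<lambda>w. free_single a w - k * free_single b w) \<in> J)"

lemma proportional_refl: "proportional a a"
  unfolding proportional_def using zero_in_J by (intro exI[of _ 1]) simp

lemma proportional_sym:
  assumes "proportional a b"
  shows "proportional b a"
proof -
  obtain k where "k \<noteq> 0" and k: "(\<lambda>w. free_single a w - k * free_single b w) \<in> J"
    using assms by (auto simp: proportional_def)
  have "(\<lambda>w. - inverse k * (free_single a w - k * free_single b w)) \<in> J"
    using J_scaled[OF k] .
  moreover have "(\<lambda>w. - inverse k * (free_single a w - k * free_single b w))
      = (\<lambda>w. free_single b w - inverse k * free_single a w)"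
    using \<open>k \<noteq> 0\<close> by (auto simp: algebra_simps)
  ultimately show ?thesis
    unfolding proportional_def using \<open>k \<noteq> 0\<close> by (intro exI[of _ "inverse k"]) simp
qed

lemma proportional_trans [trans]:
  assumes "proportional a b" and "proportional b c"
  shows "proportional a c"
proof -
  obtain k m where "k \<noteq> 0" "(\<lambda>w. free_single a w - k * free_single b w) \<in> J"
    and "m \<noteq> 0" "(\<lambda>w. free_single b w - m * free_single c w) \<in> J"
    using assms by (auto simp: proportional_def)
  then have "(\<lambda>w. (free_single a w - k * free_single b w) + k * (free_single b w - m * free_single c w)) \<in> J"
    using J_add J_scaled by blast
  moreover have "(\<lambda>w. (free_single a w - k * free_single b w) + k * (free_single b w - m * free_single c w))
      = (\<lambda>w. free_single a w - (k * m) * free_single c w)"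
    by (auto simp: algebra_simps)
  ultimately show ?thesis
    unfolding proportional_def using \<open>k \<noteq> 0\<close> \<open>m \<noteq> 0\<close> by (intro exI[of _ "k * m"]) simp
qed

lemma proportional_append:
  assumes "proportional a b"
  shows "proportional (u @ a @ v) (u @ b @ v)"
proof -
  obtain k where "k \<noteq> 0" and k: "(\<lambda>w. free_single a w + (- k) * free_single b w) \<in> J"
    using assms by (auto simp: proportional_def)
  have "free_mult (free_single u) (free_mult (\<lambda>w. free_single a w + (- k) * free_single b w) (free_single v)) \<in> J"
    using k by (intro J_mult_left J_mult_right fsupp_free_single fsupp_free_mult)
  also have "free_mult (free_single u) (free_mult (\<lambda>w. free_single a w + (- k) * free_single b w) (free_single v))
      = (\<lambda>w. free_single (u @ a @ v) w - k * free_single (u @ b @ v) w)"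
    by (simp only: free_mult_add_scaled_left[OF fsupp_free_single fsupp_free_single fsupp_free_single]
        free_mult_add_scaled_right[OF fsupp_free_single fsupp_free_single fsupp_free_single]
        free_mult_single) simp
  finally show ?thesis unfolding proportional_def using \<open>k \<noteq> 0\<close> by blast
qed

lemma proportional_appendI:
  "proportional a b \<Longrightarrow> x = u @ a @ v \<Longrightarrow> y = u @ b @ v \<Longrightarrow> proportional x y"
  using proportional_append by blast

lemma proportional_relationI:
  assumes "k \<noteq> 0"
    and "(\<lambda>w. (if w = a then 1 else 0) - (if w = b then k else 0)) \<in> J"
  shows "proportional a b"
proof -
  have "(\<lambda>w. (if w = a then 1 else 0) - (if w = b then k else 0))
      = (\<lambda>w. free_single a w - k * free_single b w)"
    by (auto simp: free_single_def)
  then show ?thesis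
    unfolding proportional_def using assms by auto
qed

lemma proportional_Inl_Inl: "proportional [Inl i, Inl j] [Inl j, Inl i]"
  using relations_subset q_nonzero[of i j] unfolding qt_relations_def
  by (intro proportional_relationI) auto

lemma proportional_Inl_Inr: "proportional [Inl i, Inr i] []"
  using relations_subset unfolding qt_relations_def
  by (intro proportional_relationI[of 1]) auto

lemma proportional_Inr_Inl: "proportional [Inr i, Inl i] []"
  using relations_subset unfolding qt_relations_def
  by (intro proportional_relationI[of 1]) auto

lemma proportional_Inr_Inr: "proportional [Inr i, Inr j] [Inr j, Inr i]"
proof -
  have "proportional [Inr i, Inr j] [Inr j, Inl j, Inr i, Inr j]"
    by (rule proportional_appendI[OF proportional_sym[OF proportional_Inr_Inl[of j]], of _ "[]"]) simp_all
  also have "proportional \<dots> [Inr j, Inr i, Inl i, Inl j, Inr i, Inr j]"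
    by (rule proportional_appendI[OF proportional_sym[OF proportional_Inr_Inl[of i]], of _ "[Inr j]"]) simp_all
  also have "proportional \<dots> [Inr j, Inr i, Inl j, Inl i, Inr i, Inr j]"
    by (rule proportional_appendI[OF proportional_Inl_Inl[of i j], of _ "[Inr j, Inr i]"]) simp_all
  also have "proportional \<dots> [Inr j, Inr i, Inl j, Inr j]"
    by (rule proportional_appendI[OF proportional_Inl_Inr[of i], of _ "[Inr j, Inr i, Inl j]"]) simp_all
  also have "proportional \<dots> [Inr j, Inr i]"
    by (rule proportional_appendI[OF proportional_Inl_Inr[of j], of _ "[Inr j, Inr i]"]) simp_all
  finally show ?thesis .
qed

lemma proportional_Inl_Inr_swap: "proportional [Inl i, Inr j] [Inr j, Inl i]"
proof -
  have "proportional [Inl i, Inr j] [Inr j, Inl j, Inl i, Inr j]"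
    by (rule proportional_appendI[OF proportional_sym[OF proportional_Inr_Inl[of j]], of _ "[]"]) simp_all
  also have "proportional \<dots> [Inr j, Inl i, Inl j, Inr j]"
    by (rule proportional_appendI[OF proportional_Inl_Inl[of j i], of _ "[Inr j]"]) simp_all
  also have "proportional \<dots> [Inr j, Inl i]"
    by (rule proportional_appendI[OF proportional_Inl_Inr[of j], of _ "[Inr j, Inl i]"]) simp_all
  finally show ?thesis .
qed

lemma proportional_swap: "proportional [l, m] [m, l]"
  by (cases l; cases m)
    (simp_all add: proportional_Inl_Inl proportional_Inr_Inr proportional_Inl_Inr_swap
      proportional_sym[OF proportional_Inl_Inr_swap])

lemma proportional_rotate: "proportional (l # w) (w @ [l])"
proof (induction w)
  case (Cons m w)
  have "proportional (l # m # w) (m # l # w)"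
    by (rule proportional_appendI[OF proportional_swap[of l m], of _ "[]" w]) simp_all
  also have "proportional \<dots> (m # w @ [l])"
    by (rule proportional_appendI[OF Cons.IH, of _ "[m]" "[]"]) simp_all
  finally show ?case by simp
qed (simp add: proportional_refl)

lemma proportional_Cons_power_word:
  "proportional (l # power_word (letter_index l) k)
     (power_word (letter_index l) (k + letter_exponent l (letter_index l)))"
proof (cases l)
  case (Inl j)
  then have exp: "letter_exponent l (letter_index l) = 1" "letter_index l = j"
    by (simp_all add: letter_exponent_def letter_index_def)
  show ?thesis
  proof (cases "0 \<le> k")
    case True
    then have "l # power_word j k = power_word j (k + 1)"
      using Inl by (simp add: power_word_nonneg nat_add_distrib)
    then show ?thesis using exp proportional_refl by simp
  next
    case False
    then have "nat (- k) = Suc (nat (- (k + 1)))" by simp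
    then have "power_word j k = Inr j # power_word j (k + 1)"
      using False by (simp add: power_word_nonpos)
    then show ?thesis
      using exp Inl proportional_appendI[OF proportional_Inl_Inr[of j], of _ "[]"] by simp
  qed
next
  case (Inr j)
  then have exp: "letter_exponent l (letter_index l) = -1" "letter_index l = j"
    by (simp_all add: letter_exponent_def letter_index_def)
  show ?thesis
  proof (cases "k \<le> 0")
    case True
    then have "nat (- (k - 1)) = Suc (nat (- k))" by simp
    then have "l # power_word j k = power_word j (k - 1)"
      using Inr True by (simp add: power_word_nonpos)
    then show ?thesis using exp proportional_refl by simp
  next
    case False
    then have "nat k = Suc (nat (k - 1))" by simp
    then have "power_word j k = Inl j # power_word j (k - 1)"
      using False by (simp add: power_word_nonneg)
    then show ?thesis
      using exp Inr proportional_appendI[OF proportional_Inr_Inl[of j], of _ "[]"] by simp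
  qed
qed

lemma proportional_Cons_normal_word:
  assumes "distinct L" and "letter_index l \<in> set L"
  shows "proportional (l # normal_word L e) (normal_word L (\<lambda>i. e i + letter_exponent l i))"
  using assms
proof (induction L)
  case (Cons i L)
  let ?e' = "\<lambda>i. e i + letter_exponent l i"
  show ?case
  proof (cases "i = letter_index l")
    case True
    then have "letter_exponent l j = 0" if "j \<in> set L" for j
      using Cons.prems that letter_exponent_other[of j l] by auto
    then have "normal_word L e = normal_word L ?e'"
      unfolding normal_word_def by (intro arg_cong[where f = concat] map_cong) auto
    moreover have "proportional (l # power_word i (e i) @ normal_word L e)
        (power_word i (e i + letter_exponent l i) @ normal_word L e)"
      by (rule proportional_appendI[OF proportional_Cons_power_word[of l "e i"], of _ "[]"])
        (simp_all add: True)
    ultimately show ?thesis by (simp add: normal_word_def)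
  next
    case False
    have "proportional (l # power_word i (e i) @ normal_word L e) (power_word i (e i) @ [l] @ normal_word L e)"
      by (rule proportional_appendI[OF proportional_rotate, of _ "[]"]) simp_all
    also have "proportional \<dots> (power_word i (e i) @ normal_word L ?e')"
    proof (rule proportional_appendI[of _ _ _ "power_word i (e i)" "[]"])
      show "proportional (l # normal_word L e) (normal_word L ?e')"
        using Cons.IH Cons.prems False by simp
    qed simp_all
    finally show ?thesis
      using letter_exponent_other[of i l] False by (simp add: normal_word_def)
  qed
qed simp

lemma proportional_normal_word:
  "distinct L \<Longrightarrow> letter_index ` set w \<subseteq> set L \<Longrightarrow> proportional w (normal_word L (exponents w))"
proof (induction w)
  case (Cons l w)
  have "proportional (l # w) (l # normal_word L (exponents w))"
  proof (rule proportional_appendI[of _ _ _ "[l]" "[]"])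
    show "proportional w (normal_word L (exponents w))" using Cons by simp
  qed simp_all
  also have "proportional \<dots> (normal_word L (\<lambda>i. exponents w i + letter_exponent l i))"
    using Cons.prems by (intro proportional_Cons_normal_word) auto
  also have "(\<lambda>i. exponents w i + letter_exponent l i) = exponents (l # w)"
    by (simp add: add.commute)
  finally show ?case .
qed (simp add: normal_word_0 proportional_refl)

lemma proportional_if_exponents_eq:
  assumes "exponents w1 = exponents w2"
  shows "proportional w1 w2"
proof -
  obtain L where L: "set L = letter_index ` set w1 \<union> letter_index ` set w2" "distinct L"
    using finite_distinct_list[of "letter_index ` set w1 \<union> letter_index ` set w2"] by auto
  have "proportional w1 (normal_word L (exponents w1))"
    by (rule proportional_normal_word[OF L(2)]) (simp add: L(1))
  moreover have "proportional w2 (normal_word L (exponents w1))"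
    unfolding assms by (rule proportional_normal_word[OF L(2)]) (simp add: L(1))
  ultimately show ?thesis
    using proportional_trans proportional_sym by blast
qed

lemma proportional_if_word_deg_eq:
  "free_basis b \<Longrightarrow> word_deg b w1 = word_deg b w2 \<Longrightarrow> proportional w1 w2"
  by (rule proportional_if_exponents_eq) (rule free_basis_exponents_eq)

lemma sum_free_single:
  assumes "finite W" and "{w. f w \<noteq> 0} \<subseteq> W"
  shows "(\<Sum>w\<in>W. f w * free_single w u) = f u"
proof -
  have "(\<Sum>w\<in>W. f w * free_single w u) = (\<Sum>w\<in>W. if u = w then f w else 0)"
    by (intro sum.cong) (simp_all add: free_single_def)
  then show ?thesis using assms by auto
qed

lemma congruent_sum_proportional:
  assumes "finite W" and "{w. f w \<noteq> 0} \<subseteq> W" and "\<And>w. w \<in> W \<Longrightarrow> proportional w (r w)"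
  shows "\<exists>k. (\<lambda>u. f u - (\<Sum>w\<in>W. f w * k w * free_single (r w) u)) \<in> J"
proof -
  have "\<forall>w\<in>W. \<exists>k. (\<lambda>u. free_single w u - k * free_single (r w) u) \<in> J"
    using assms(3) unfolding proportional_def by blast
  then obtain k where k: "\<forall>w\<in>W. (\<lambda>u. free_single w u - k w * free_single (r w) u) \<in> J"
    by (rule bchoice[THEN exE])
  have "(\<lambda>u. f u - (\<Sum>w\<in>W. f w * k w * free_single (r w) u))
      = (\<lambda>u. \<Sum>w\<in>W. f w * (free_single w u - k w * free_single (r w) u))"
    using sum_free_single[OF assms(1,2)] by (simp add: algebra_simps sum_subtractf)
  also have "\<dots> \<in> J"
    using J_sum[OF assms(1), of "\<lambda>w u. f w * (free_single w u - k w * free_single (r w) u)"]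
      J_scaled k by blast
  finally show ?thesis by blast
qed

text \<open>Modulo \<open>J\<close>, each word of the support of \<open>f\<close> may be replaced by a fixed word of the same
  degree, since words of equal degree are proportional.\<close>
lemma ex_degree_separated_representative:
  fixes b :: "'i \<Rightarrow> 'g::ab_group_add"
  assumes "free_basis b" and "fsupp f"
  shows "\<exists>g M. finite M \<and> inj_on (word_deg b) M \<and> {u. g u \<noteq> 0} \<subseteq> M \<and> (\<lambda>u. f u - g u) \<in> J"
proof -
  define W where "W = {w. f w \<noteq> 0}"
  have "finite W" using assms(2) by (simp add: fsupp_def W_def)
  define r where "r w = (SOME w'. w' \<in> W \<and> word_deg b w' = word_deg b w)" for w
  have r: "r w \<in> W \<and> word_deg b (r w) = word_deg b w" if "w \<in> W" for w
    unfolding r_def by (rule someI[of _ w]) (simp add: that)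
  then have "proportional w (r w)" if "w \<in> W" for w
    using proportional_if_word_deg_eq[OF assms(1)] that by simp
  moreover have "{w. f w \<noteq> 0} \<subseteq> W" by (simp add: W_def)
  ultimately obtain k where k: "(\<lambda>u. f u - (\<Sum>w\<in>W. f w * k w * free_single (r w) u)) \<in> J"
    using congruent_sum_proportional[OF \<open>finite W\<close>] by blast
  have "{u. (\<Sum>w\<in>W. f w * k w * free_single (r w) u) \<noteq> 0} \<subseteq> r ` W"
  proof
    fix u assume "u \<in> {u. (\<Sum>w\<in>W. f w * k w * free_single (r w) u) \<noteq> 0}"
    then have "(\<Sum>w\<in>W. f w * k w * free_single (r w) u) \<noteq> 0" by simp
    then obtain w where "w \<in> W" "f w * k w * free_single (r w) u \<noteq> 0"
      by (rule sum.not_neutral_contains_not_neutral)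
    then show "u \<in> r ` W" by (auto simp: free_single_def split: if_splits)
  qed
  moreover have "inj_on (word_deg b) (r ` W)"
  proof (rule inj_onI)
    fix m1 m2 assume "m1 \<in> r ` W" "m2 \<in> r ` W" and "word_deg b m1 = word_deg b m2"
    then obtain w1 w2 where "w1 \<in> W" "w2 \<in> W" "m1 = r w1" "m2 = r w2"
      and "word_deg b w1 = word_deg b w2" using r by auto
    then show "m1 = m2" by (simp add: r_def)
  qed
  ultimately show ?thesis
    using \<open>finite W\<close> k
    by (intro exI[of _ "\<lambda>u. \<Sum>w\<in>W. f w * k w * free_single (r w) u"] exI[of _ "r ` W"]) simp
qed

end

section \<open>The quantum torus presentation\<close>

context jordan_torus_algebra
begin

definition gen :: "('i \<Rightarrow> 'g) \<Rightarrow> 'i \<Rightarrow> 'a" where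
  "gen b i = hbasis (b i)"

definition gen_inv :: "('i \<Rightarrow> 'g) \<Rightarrow> 'i \<Rightarrow> 'a" where
  "gen_inv b i = (SOME y. gen b i * y = 1 \<and> y * gen b i = 1)"

lemma gen_in_Agr: "gen b i \<in> Agr (b i)"
  by (simp add: gen_def hbasis_in_Agr)

lemma gen_nonzero: "gen b i \<noteq> 0"
  by (simp add: gen_def hbasis_nonzero)

lemma gen_gen_inv: "gen b i * gen_inv b i = 1" and gen_inv_gen: "gen_inv b i * gen b i = 1"
proof -
  have "\<exists>y. gen b i * y = 1 \<and> y * gen b i = 1"
    using homogeneous_invertible[OF gen_in_Agr gen_nonzero] by (simp add: invertible_def)
  then have "gen b i * gen_inv b i = 1 \<and> gen_inv b i * gen b i = 1"
    unfolding gen_inv_def by (rule someI_ex)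
  then show "gen b i * gen_inv b i = 1" "gen_inv b i * gen b i = 1" by simp_all
qed

lemma gen_inv_in_Agr: "gen_inv b i \<in> Agr (- b i)"
  by (rule inverse_in_Agr[OF gen_in_Agr gen_gen_inv gen_inv_gen])

definition monomial :: "('i \<Rightarrow> 'g) \<Rightarrow> ('i + 'i) list \<Rightarrow> 'a" where
  "monomial b w = prod_list (map (\<lambda>l. case l of Inl i \<Rightarrow> gen b i | Inr i \<Rightarrow> gen_inv b i) w)"

lemma monomial_Nil [simp]: "monomial b [] = 1"
  and monomial_append: "monomial b (u @ w) = monomial b u * monomial b w"
  by (simp_all add: monomial_def)

lemma monomial_in_Agr: "monomial b w \<in> Agr (word_deg b w)"
proof (induction w)
  case (Cons l w)
  have "(case l of Inl i \<Rightarrow> gen b i | Inr i \<Rightarrow> gen_inv b i) \<in> Agr (letter_deg b l)"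
    by (cases l) (simp_all add: letter_deg_def gen_in_Agr gen_inv_in_Agr)
  from mult_in_Agr[OF this Cons.IH] show ?case
    by (simp add: monomial_def word_deg_Cons)
qed (simp add: one_in_Agr_0)

lemma monomial_invertible: "invertible (monomial b w)"
proof (induction w)
  case (Cons l w)
  have "invertible (case l of Inl i \<Rightarrow> gen b i | Inr i \<Rightarrow> gen_inv b i)"
    unfolding invertible_def
    by (cases l) (auto intro: exI[of _ "gen b _"] exI[of _ "gen_inv b _"] gen_gen_inv gen_inv_gen)
  from invertible_mult[OF this Cons.IH] show ?case
    by (simp add: monomial_def)
qed (auto simp: invertible_def)

lemma monomial_nonzero: "monomial b w \<noteq> 0"
  by (rule invertible_nonzero[OF monomial_invertible])

definition commutation :: "('i \<Rightarrow> 'g) \<Rightarrow> 'i \<Rightarrow> 'i \<Rightarrow> 'k" where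
  "commutation b i j = (SOME c. gen b i * gen b j = sc c (gen b j * gen b i))"

lemma gen_commute: "gen b i * gen b j = sc (commutation b i j) (gen b j * gen b i)"
proof -
  have "gen b j * gen b i \<in> Agr (b i + b j)"
    using mult_in_Agr[OF gen_in_Agr[of b j] gen_in_Agr[of b i]] by (simp add: add.commute)
  then have "\<exists>c. gen b i * gen b j = sc c (gen b j * gen b i)"
    by (rule Agr_proportional[OF mult_in_Agr[OF gen_in_Agr gen_in_Agr]])
      (rule homogeneous_mult_nonzero[OF gen_in_Agr gen_nonzero gen_in_Agr gen_nonzero])
  then show ?thesis unfolding commutation_def by (rule someI_ex)
qed

lemma quantum_matrix_commutation: "quantum_matrix (commutation b)"
  unfolding quantum_matrix_def
proof (intro conjI allI)
  fix i j
  have nonzero: "gen b i * gen b j \<noteq> 0"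
    using homogeneous_mult_nonzero[OF gen_in_Agr gen_nonzero gen_in_Agr gen_nonzero] .
  show "commutation b i j \<noteq> 0"
    using gen_commute[of b i j]
      homogeneous_mult_nonzero[OF gen_in_Agr[of b i] gen_nonzero gen_in_Agr[of b j] gen_nonzero]
    by auto
  have "sc (commutation b i j * commutation b j i) (gen b i * gen b j) = sc 1 (gen b i * gen b j)"
    using gen_commute[of b i j] gen_commute[of b j i] by (simp add: sc_sc)
  then have "commutation b i j * commutation b j i = 1"
    by (rule sc_cancel_right[OF nonzero])
  then show "commutation b i j = inverse (commutation b j i)"
    by (simp add: inverse_unique mult.commute)
next
  fix i
  have "sc (commutation b i i) (gen b i * gen b i) = sc 1 (gen b i * gen b i)"
    using gen_commute[of b i i] by simp
  then show "commutation b i i = 1"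
    by (rule sc_cancel_right[OF homogeneous_mult_nonzero[OF gen_in_Agr gen_nonzero gen_in_Agr gen_nonzero]])
qed

abbreviation qt_eval :: "('i \<Rightarrow> 'g) \<Rightarrow> (('i + 'i) list \<Rightarrow> 'k) \<Rightarrow> 'a" where
  "qt_eval b \<equiv> free_eval sc (gen b) (gen_inv b)"

lemma qt_eval_superset:
  assumes "finite W" and "{w. f w \<noteq> 0} \<subseteq> W"
  shows "qt_eval b f = (\<Sum>w\<in>W. sc (f w) (monomial b w))"
  unfolding free_eval_def monomial_def[symmetric]
  by (rule sum.mono_neutral_left[OF assms]) auto

lemma qt_eval_add_scaled:
  assumes "fsupp f" and "fsupp g"
  shows "qt_eval b (\<lambda>w. f w + c * g w) = qt_eval b f + sc c (qt_eval b g)"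
proof -
  let ?W = "{w. f w \<noteq> 0} \<union> {w. g w \<noteq> 0}"
  have W: "finite ?W" using assms by (simp add: fsupp_def)
  have "qt_eval b (\<lambda>w. f w + c * g w) = (\<Sum>w\<in>?W. sc (f w + c * g w) (monomial b w))"
    by (rule qt_eval_superset[OF W]) auto
  also have "\<dots> = (\<Sum>w\<in>?W. sc (f w) (monomial b w)) + sc c (\<Sum>w\<in>?W. sc (g w) (monomial b w))"
    by (simp add: sc_add_left sc_sc sc_sum_right sum.distrib)
  also have "\<dots> = qt_eval b f + sc c (qt_eval b g)"
    by (simp add: qt_eval_superset[OF W])
  finally show ?thesis .
qed

lemma qt_eval_scaled: "fsupp f \<Longrightarrow> qt_eval b (\<lambda>w. c * f w) = sc c (qt_eval b f)"
  using qt_eval_add_scaled[OF fsupp_zero, of f b c] by (simp add: free_eval_def)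

lemma qt_eval_single: "qt_eval b (free_single a) = monomial b a"
  by (subst qt_eval_superset[of "{a}"]) (auto simp: free_single_def)

lemma qt_eval_free_mult:
  assumes "fsupp f" and "fsupp g"
  shows "qt_eval b (free_mult f g) = qt_eval b f * qt_eval b g"
proof -
  define U where "U = {u. f u \<noteq> 0}"
  define V where "V = {v. g v \<noteq> 0}"
  have "finite U" "finite V" using assms by (simp_all add: fsupp_def U_def V_def)
  define W where "W = (\<lambda>(u, v). u @ v) ` (U \<times> V)"
  have "finite W" using \<open>finite U\<close> \<open>finite V\<close> by (simp add: W_def)
  have "qt_eval b (free_mult f g) = (\<Sum>w\<in>W. sc (free_mult f g w) (monomial b w))"
    using supp_free_mult[of f g] by (intro qt_eval_superset[OF \<open>finite W\<close>]) (simp add: W_def U_def V_def)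
  also have "\<dots> = (\<Sum>w\<in>W. \<Sum>u\<in>U. \<Sum>v\<in>V. if u @ v = w then sc (f u * g v) (monomial b w) else 0)"
    unfolding free_mult_def U_def[symmetric] V_def[symmetric]
    by (simp add: sc_sum_left if_distrib[of "\<lambda>c. sc c _"] cong: if_cong)
  also have "\<dots> = (\<Sum>u\<in>U. \<Sum>v\<in>V. \<Sum>w\<in>W. if u @ v = w then sc (f u * g v) (monomial b w) else 0)"
    by (subst sum.swap) (subst (2) sum.swap, rule refl)
  also have "\<dots> = (\<Sum>u\<in>U. \<Sum>v\<in>V. sc (f u) (monomial b u) * sc (g v) (monomial b v))"
    using \<open>finite W\<close> by (intro sum.cong refl) (auto simp: W_def sc_mult_sc monomial_append)
  also have "\<dots> = (\<Sum>u\<in>U. sc (f u) (monomial b u)) * (\<Sum>v\<in>V. sc (g v) (monomial b v))"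
    by (subst sum_distrib_right) (simp add: sum_distrib_left)
  also have "\<dots> = qt_eval b f * qt_eval b g"
    by (simp add: free_eval_def monomial_def U_def V_def)
  finally show ?thesis .
qed

lemma qt_eval_zero: "qt_eval b (\<lambda>w. 0) = 0"
  by (simp add: free_eval_def)

lemma qt_eval_add: "fsupp f \<Longrightarrow> fsupp g \<Longrightarrow> qt_eval b (\<lambda>w. f w + g w) = qt_eval b f + qt_eval b g"
  using qt_eval_add_scaled[of f g b 1] by simp

lemma qt_eval_diff: "fsupp f \<Longrightarrow> fsupp g \<Longrightarrow> qt_eval b (\<lambda>w. f w - g w) = qt_eval b f - qt_eval b g"
  using qt_eval_add_scaled[of f g b "- 1"] by (simp add: sc_minus_left)

definition eval_kernel :: "('i \<Rightarrow> 'g) \<Rightarrow> (('i + 'i) list \<Rightarrow> 'k) set" where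
  "eval_kernel b = {f. fsupp f \<and> qt_eval b f = 0}"

lemma is_free_ideal_eval_kernel: "is_free_ideal (eval_kernel b)"
  unfolding is_free_ideal_def eval_kernel_def
  by (auto simp: fsupp_zero fsupp_add fsupp_scaled qt_eval_zero qt_eval_add qt_eval_scaled
      fsupp_free_mult qt_eval_free_mult)

lemma relation_in_eval_kernel:
  assumes "monomial b a = sc c (monomial b a')"
  shows "(\<lambda>w. (if w = a then 1 else 0) - (if w = a' then c else 0)) \<in> eval_kernel b"
proof -
  have "(\<lambda>w. (if w = a then 1 else 0) - (if w = a' then c else 0))
      = (\<lambda>w. free_single a w - c * free_single a' w)"
    by (auto simp: free_single_def)
  moreover have "fsupp (\<lambda>w. free_single a w - c * free_single a' w)"
    unfolding fsupp_def by (rule finite_subset[of _ "{a, a'}"]) (auto simp: free_single_def)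
  moreover have "qt_eval b (\<lambda>w. free_single a w - c * free_single a' w)
      = monomial b a - sc c (monomial b a')"
    using qt_eval_diff[OF fsupp_free_single fsupp_scaled[OF fsupp_free_single]]
    by (simp add: qt_eval_scaled fsupp_free_single qt_eval_single)
  ultimately show ?thesis using assms by (simp add: eval_kernel_def)
qed

lemma qt_relations_subset_eval_kernel: "qt_relations (commutation b) \<subseteq> eval_kernel b"
proof
  fix r assume "r \<in> qt_relations (commutation b)"
  then consider
      (commute) i j where "r = (\<lambda>w. (if w = [Inl i, Inl j] then 1 else 0)
        - (if w = [Inl j, Inl i] then commutation b i j else 0))"
    | (inverse_right) i where "r = (\<lambda>w. (if w = [Inl i, Inr i] then 1 else 0) - (if w = [] then 1 else 0))"
    | (inverse_left) i where "r = (\<lambda>w. (if w = [Inr i, Inl i] then 1 else 0) - (if w = [] then 1 else 0))"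
    unfolding qt_relations_def by blast
  then show "r \<in> eval_kernel b"
  proof cases
    case commute
    then show ?thesis
      by (simp add: relation_in_eval_kernel monomial_def gen_commute[of b i j])
  next
    case inverse_right
    then show ?thesis by (simp add: relation_in_eval_kernel monomial_def gen_gen_inv)
  next
    case inverse_left
    then show ?thesis by (simp add: relation_in_eval_kernel monomial_def gen_inv_gen)
  qed
qed

lemma qt_eval_degree_separated_eq_0:
  assumes "finite M" and "inj_on (word_deg b) M" and "{u. g u \<noteq> 0} \<subseteq> M" and "qt_eval b g = 0"
  shows "g u = 0"
proof (cases "u \<in> M")
  case True
  have "(\<Sum>m\<in>M. sc (g m) (monomial b m)) = 0"
    using qt_eval_superset[OF assms(1,3)] assms(4) by simp
  then show ?thesis
    using sum_Agr_eq_0[OF assms(1,2) Agr_sc[OF monomial_in_Agr] _ True]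
      sc_eq_0_iff[OF monomial_nonzero] by blast
qed (use assms(3) in blast)

text \<open>Modulo such an ideal, a kernel element becomes one supported on words of distinct degrees,
  whose image vanishes only if it is zero.\<close>
lemma eval_kernel_subset:
  fixes b :: "'i \<Rightarrow> 'g"
  assumes "free_basis b" and "is_free_ideal J" and "qt_relations (commutation b) \<subseteq> J"
  shows "eval_kernel b \<subseteq> J"
proof
  fix f assume f: "f \<in> eval_kernel b"
  interpret I: quantum_relations_ideal "J \<inter> eval_kernel b" "commutation b"
  proof
    show "is_free_ideal (J \<inter> eval_kernel b)"
      by (rule is_free_ideal_Int[OF assms(2) is_free_ideal_eval_kernel])
    show "qt_relations (commutation b) \<subseteq> J \<inter> eval_kernel b"
      using assms(3) qt_relations_subset_eval_kernel by blast
    show "commutation b i j \<noteq> 0" for i j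
      using quantum_matrix_commutation[of b] unfolding quantum_matrix_def by blast
  qed
  have "fsupp f" and "qt_eval b f = 0"
    using f by (simp_all add: eval_kernel_def)
  then obtain g M where M: "finite M" "inj_on (word_deg b) M" "{u. g u \<noteq> 0} \<subseteq> M"
    and fg: "(\<lambda>u. f u - g u) \<in> J \<inter> eval_kernel b"
    using I.ex_degree_separated_representative[OF assms(1)] by blast
  have "fsupp g"
    unfolding fsupp_def using finite_subset[OF M(3,1)] .
  moreover have "fsupp (\<lambda>u. f u - g u)" and "qt_eval b (\<lambda>u. f u - g u) = 0"
    using fg by (simp_all add: eval_kernel_def)
  ultimately have "qt_eval b g = 0"
    using qt_eval_diff[OF \<open>fsupp f\<close> \<open>fsupp (\<lambda>u. f u - g u)\<close>] \<open>qt_eval b f = 0\<close> by simp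
  then have "g u = 0" for u
    by (rule qt_eval_degree_separated_eq_0[OF M])
  then show "f \<in> J" using fg by simp
qed

lemma eval_kernel_eq_free_ideal:
  fixes b :: "'i \<Rightarrow> 'g"
  assumes "free_basis b"
  shows "eval_kernel b = free_ideal (qt_relations (commutation b))"
  unfolding free_ideal_eq_Inter
  using eval_kernel_subset[OF assms] is_free_ideal_eval_kernel qt_relations_subset_eval_kernel
  by blast

lemma qt_eval_free_deg:
  fixes b :: "'i \<Rightarrow> 'g"
  assumes "free_basis b"
  shows "qt_eval b ` free_deg b s = Agr s"
proof
  show "qt_eval b ` free_deg b s \<subseteq> Agr s"
  proof
    fix x assume "x \<in> qt_eval b ` free_deg b s"
    then obtain f where f: "f \<in> free_deg b s" "x = qt_eval b f" by blast
    have "sc (f w) (monomial b w) \<in> Agr s" if "f w \<noteq> 0" for w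
      using f that Agr_sc[OF monomial_in_Agr[of b w]] by (simp add: free_deg_def)
    then have "(\<Sum>w\<in>{w. f w \<noteq> 0}. sc (f w) (monomial b w)) \<in> Agr s"
      by (intro Agr_sum) simp
    then show "x \<in> Agr s"
      using f by (simp add: free_eval_def monomial_def)
  qed
next
  show "Agr s \<subseteq> qt_eval b ` free_deg b s"
  proof
    fix x assume "x \<in> Agr s"
    obtain w where w: "word_deg b w = s" using free_basis_ex_word[OF assms] by blast
    then obtain c where "x = sc c (monomial b w)"
      using Agr_proportional[OF \<open>x \<in> Agr s\<close> _ monomial_nonzero] monomial_in_Agr by blast
    then have "x = qt_eval b (\<lambda>u. c * free_single w u)"
      by (simp add: qt_eval_scaled fsupp_free_single qt_eval_single)
    moreover have "(\<lambda>u. c * free_single w u) \<in> free_deg b s"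
      using fsupp_scaled[OF fsupp_free_single] w
      by (auto simp: free_deg_def free_single_def)
    ultimately show "x \<in> qt_eval b ` free_deg b s" by blast
  qed
qed

lemma sum_in_range_qt_eval:
  "finite D \<Longrightarrow> (\<And>s. s \<in> D \<Longrightarrow> x s \<in> qt_eval b ` {f. fsupp f}) \<Longrightarrow> (\<Sum>s\<in>D. x s) \<in> qt_eval b ` {f. fsupp f}"
proof (induction D rule: finite_induct)
  case empty
  show ?case by (rule image_eqI[of _ _ "\<lambda>w. 0"]) (simp_all add: qt_eval_zero fsupp_zero)
next
  case (insert s D)
  then obtain f g where "fsupp f" "x s = qt_eval b f" "fsupp g" "(\<Sum>s\<in>D. x s) = qt_eval b g"
    by force
  then show ?case
    using insert.hyps fsupp_add[of f g]
    by (intro image_eqI[of _ _ "\<lambda>w. f w + g w"]) (simp_all add: qt_eval_add)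
qed

lemma range_qt_eval:
  fixes b :: "'i \<Rightarrow> 'g"
  assumes "free_basis b"
  shows "qt_eval b ` {f. fsupp f} = UNIV"
proof -
  have "free_deg b s \<subseteq> {f. fsupp f}" for s
    by (auto simp: free_deg_def)
  then have "component a s \<in> qt_eval b ` {f. fsupp f}" for a s
    using qt_eval_free_deg[OF assms] component_in_Agr by blast
  then have "a \<in> qt_eval b ` {f. fsupp f}" for a
    using sum_in_range_qt_eval[OF finite_component] sum_component by metis
  then show ?thesis by blast
qed

lemma graded_iso_quantum_torus_commutation:
  fixes b :: "'i \<Rightarrow> 'g"
  assumes "free_basis b"
  shows "graded_iso_quantum_torus sc Agr b (commutation b)"
  unfolding graded_iso_quantum_torus_def
  using range_qt_eval[OF assms] eval_kernel_eq_free_ideal[OF assms] qt_eval_free_deg[OF assms]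
  by (auto simp: eval_kernel_def)

end

theorem lemma1p10:
  fixes sc :: "'k::field_char_0 \<Rightarrow> 'a::ring_1 \<Rightarrow> 'a"
    and Agr :: "'g::ab_group_add \<Rightarrow> 'a set"
  assumes "torsion_free TYPE('g)"
    and "is_algebra sc"
    and "jordan_torus sc Agr"
  shows "(\<exists>lam. cocycle lam \<and> graded_iso_twisted sc Agr lam) \<and>
         (\<forall>b :: 'i::linorder \<Rightarrow> 'g. free_basis b \<longrightarrow>
            (\<exists>q. quantum_matrix q \<and> graded_iso_quantum_torus sc Agr b q))"
proof -
  interpret jordan_torus_algebra sc Agr
    using assms by unfold_locales (auto simp: jordan_torus_def jordan_grading_def)
  show ?thesis
    using cocycle_twist graded_iso_twisted_twist quantum_matrix_commutation
      graded_iso_quantum_torus_commutation by blast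
qed

end
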